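(* Let $m,n\ge 1$, $k\ge 2$ and $P\in\mathbb{R}[x_1,\ldots,x_n]$. There is exactly one polynomial $P_0\in V_{m,k}$ such that $P-P_0$ has a zero of multiplicity at least $k$ at every point of $mB^n\setminus\{\mathbf 0\}$ and a zero of multiplicity at least $k-1$ at $\mathbf 0$. This polynomial satisfies $\deg P_0\le \deg P$.
   Context: $mB^n=\{0,1,\ldots,m\}^n$. A polynomial $f$ has a zero of multiplicity at least $k$ at $\mathbf a$ if all partial derivatives of $f$ of order less than $k$ vanish at $\mathbf a$. For an integer $k\ge 2$, a polynomial $P\in\mathbb{R}[x_1,\ldots,x_n]$ is called $(m,k)$-reduced if two conditions hold: $\deg P\le mn+(m+1)(k-1)-1$, and no monomial of $P$ is divisible by $x_{i_1}^{m+1}\cdots x_{i_k}^{m+1}$ for any indices $i_1,\ldots,i_k$ (not necessarily distinct). $V_{m,k}$ is the space of all $(m,k)$-reduced polynomials. *)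

theory Defs
  imports "HOL-Library.Poly_Mapping" Complex_Main
begin

text \<open>Multivariate real polynomials in variables x_0, x_1, ... (index i stands for x_(i+1)),
  represented as finitely supported maps from exponent vectors (monomials) to coefficients.\<close>

type_synonym mpoly = "(nat \<Rightarrow>\<^sub>0 nat) \<Rightarrow>\<^sub>0 real"

definition mvars :: "mpoly \<Rightarrow> nat set" where
  "mvars P = \<Union> ((\<lambda>\<alpha>::nat \<Rightarrow>\<^sub>0 nat. Poly_Mapping.keys \<alpha>) ` Poly_Mapping.keys P)"

definition mon_deg :: "(nat \<Rightarrow>\<^sub>0 nat) \<Rightarrow> nat" where
  "mon_deg \<alpha> = (\<Sum>v\<in>Poly_Mapping.keys \<alpha>. Poly_Mapping.lookup \<alpha> v)"

text \<open>Total degree (degree of the zero polynomial taken to be 0).\<close>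
definition mdeg :: "mpoly \<Rightarrow> nat" where
  "mdeg P = Max (insert 0 (mon_deg ` Poly_Mapping.keys P))"

definition meval :: "mpoly \<Rightarrow> (nat \<Rightarrow> real) \<Rightarrow> real" where
  "meval P a = (\<Sum>\<alpha>\<in>Poly_Mapping.keys P. Poly_Mapping.lookup P \<alpha> * (\<Prod>v\<in>Poly_Mapping.keys \<alpha>. a v ^ Poly_Mapping.lookup \<alpha> v))"

definition mpderiv :: "nat \<Rightarrow> mpoly \<Rightarrow> mpoly" where
  "mpderiv i P = (\<Sum>\<alpha>\<in>Poly_Mapping.keys P.
      Poly_Mapping.single (\<alpha> - Poly_Mapping.single i 1) (Poly_Mapping.lookup P \<alpha> * of_nat (Poly_Mapping.lookup \<alpha> i)))"

definition zero_mult_ge :: "nat \<Rightarrow> nat \<Rightarrow> mpoly \<Rightarrow> (nat \<Rightarrow> real) \<Rightarrow> bool" where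
  "zero_mult_ge n k P a \<longleftrightarrow>
     (\<forall>is. length is < k \<longrightarrow> set is \<subseteq> {..<n} \<longrightarrow> meval (foldr mpderiv is P) a = 0)"

definition grid :: "nat \<Rightarrow> nat \<Rightarrow> (nat \<Rightarrow> real) set" where
  "grid m n = {a. (\<forall>i<n. a i \<in> real ` {0..m}) \<and> (\<forall>i\<ge>n. a i = 0)}"

definition reduced :: "nat \<Rightarrow> nat \<Rightarrow> nat \<Rightarrow> mpoly \<Rightarrow> bool" where
  "reduced n m k P \<longleftrightarrow>
     mvars P \<subseteq> {..<n} \<and>
     mdeg P \<le> m * n + (m + 1) * (k - 1) - 1 \<and>
     (\<forall>\<alpha>\<in>Poly_Mapping.keys P. \<not> (\<exists>is. length is = k \<and> set is \<subseteq> {..<n} \<and>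
        (\<forall>v. Poly_Mapping.lookup (\<Sum>j\<leftarrow>is. Poly_Mapping.single j (m + 1)) v \<le> Poly_Mapping.lookup \<alpha> v)))"

end

theory Submission
  imports Defs "HOL-Computational_Algebra.Polynomial"
begin

(*
  Write g_i = prod_{j=0..m} (x_i - j) and G_q = prod_i g_i^(q_i); G_q vanishes to order
  |q| = sum_i q_i at every point of the grid. Reducing x_i^(m+1) modulo g_i expands every
  monomial x^b as a combination of terms G_q x^r with r in the box {0..m}^n and
  (m+1) q + r <= b. To obtain P0, drop the terms with |q| >= k, and in the terms with
  |q| = k - 1 and r = (m,...,m) replace x^r by x^r - prod_i prod_{j=1..m} (x_i - j); the
  subtracted product vanishes off the origin, so P - P0 has the required zeros, and what
  remains is reduced and of degree at most deg P.
  Conversely, expand a reduced R with these zeros in the same way and group the terms by q: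
  R = sum_Q G_Q phi_Q with |Q| <= k - 1. By induction on |Q|, differentiating |Q| times
  along the exponents of Q shows that phi_Q vanishes on the grid (off the origin with zero
  top coefficient when |Q| = k - 1), and a polynomial of degree at most m in each variable
  with this property is zero.
*)

abbreviation lookup :: "('a \<Rightarrow>\<^sub>0 'b::zero) \<Rightarrow> 'a \<Rightarrow> 'b" where
  "lookup \<equiv> Poly_Mapping.lookup"
abbreviation keys :: "('a \<Rightarrow>\<^sub>0 'b::zero) \<Rightarrow> 'a set" where
  "keys \<equiv> Poly_Mapping.keys"
abbreviation single :: "'a \<Rightarrow> 'b::zero \<Rightarrow> 'a \<Rightarrow>\<^sub>0 'b" where
  "single \<equiv> Poly_Mapping.single"

type_synonym mon = "nat \<Rightarrow>\<^sub>0 nat"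

lemma mpoly_eq_sum_single_superset:
  assumes "finite S" "keys P \<subseteq> S"
  shows "(P::mpoly) = (\<Sum>\<alpha>\<in>S. single \<alpha> (lookup P \<alpha>))"
proof (rule poly_mapping_eqI)
  fix \<gamma>
  have "lookup (\<Sum>\<alpha>\<in>S. single \<alpha> (lookup P \<alpha>)) \<gamma> = (\<Sum>\<alpha>\<in>S. if \<alpha> = \<gamma> then lookup P \<alpha> else 0)"
    by (simp add: lookup_sum lookup_single when_def)
  also have "\<dots> = lookup P \<gamma>"
    using assms by (auto simp: in_keys_iff)
  finally show "lookup P \<gamma> = lookup (\<Sum>\<alpha>\<in>S. single \<alpha> (lookup P \<alpha>)) \<gamma>" by simp
qed

lemma mpoly_eq_sum_single: "(P::mpoly) = (\<Sum>\<alpha>\<in>keys P. single \<alpha> (lookup P \<alpha>))"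
  by (rule mpoly_eq_sum_single_superset) auto

lemma mpoly_mult_eq_sum_single:
  "(P::mpoly) * Q = (\<Sum>\<alpha>\<in>keys P. \<Sum>\<beta>\<in>keys Q. single (\<alpha> + \<beta>) (lookup P \<alpha> * lookup Q \<beta>))"
  by (subst mpoly_eq_sum_single[of P], subst mpoly_eq_sum_single[of Q]) (simp add: sum_product mult_single)

lemma mpderiv_eq_sum_superset:
  assumes "finite S" "keys P \<subseteq> S"
  shows "mpderiv i P = (\<Sum>\<alpha>\<in>S. single (\<alpha> - single i 1) (lookup P \<alpha> * of_nat (lookup \<alpha> i)))"
  unfolding mpderiv_def
  by (rule sum.mono_neutral_left) (use assms in \<open>auto simp: in_keys_iff\<close>)

lemma meval_eq_sum_superset:
  assumes "finite S" "keys P \<subseteq> S"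
  shows "meval P a = (\<Sum>\<alpha>\<in>S. lookup P \<alpha> * (\<Prod>v\<in>keys \<alpha>. a v ^ lookup \<alpha> v))"
  unfolding meval_def
  by (rule sum.mono_neutral_left) (use assms in \<open>auto simp: in_keys_iff\<close>)

lemma mpderiv_add: "mpderiv i (P + Q) = mpderiv i P + mpderiv i Q"
proof -
  let ?S = "keys P \<union> keys Q"
  show ?thesis
    by (simp add: mpderiv_eq_sum_superset[OF _ keys_add] mpderiv_eq_sum_superset[of ?S P]
        mpderiv_eq_sum_superset[of ?S Q] lookup_add distrib_right single_add sum.distrib)
qed

lemma mpderiv_zero [simp]: "mpderiv i 0 = 0"
  by (simp add: mpderiv_def)

lemma mpderiv_single:
  "mpderiv i (single \<alpha> c) = single (\<alpha> - single i 1) (c * of_nat (lookup \<alpha> i))"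
  by (subst mpderiv_eq_sum_superset[of "{\<alpha>}"]) auto

lemma mpderiv_sum: "mpderiv i (\<Sum>x\<in>A. f x) = (\<Sum>x\<in>A. mpderiv i (f x))"
  by (induction A rule: infinite_finite_induct) (auto simp: mpderiv_add)

lemma mpderiv_uminus: "mpderiv i (- P) = - mpderiv i P"
  by (metis add_eq_0_iff2 mpderiv_add mpderiv_zero)

lemma mpderiv_diff: "mpderiv i (P - Q) = mpderiv i P - mpderiv i Q"
  by (metis diff_conv_add_uminus mpderiv_add mpderiv_uminus)

definition mon_eval :: "mon \<Rightarrow> (nat \<Rightarrow> real) \<Rightarrow> real" where
  "mon_eval \<alpha> a = (\<Prod>v\<in>keys \<alpha>. a v ^ lookup \<alpha> v)"

lemma meval_eq_sum_mon_eval: "meval P a = (\<Sum>\<alpha>\<in>keys P. lookup P \<alpha> * mon_eval \<alpha> a)"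
  by (simp add: meval_def mon_eval_def)

lemma mon_eval_eq_prod_superset:
  assumes "finite S" "keys \<alpha> \<subseteq> S"
  shows "mon_eval \<alpha> a = (\<Prod>v\<in>S. a v ^ lookup \<alpha> v)"
  unfolding mon_eval_def
  by (rule prod.mono_neutral_left) (use assms in \<open>auto simp: in_keys_iff\<close>)

lemma mon_eval_add: "mon_eval (\<alpha> + \<beta>) a = mon_eval \<alpha> a * mon_eval \<beta> a"
proof -
  let ?S = "keys \<alpha> \<union> keys \<beta>"
  show ?thesis
    by (simp add: mon_eval_eq_prod_superset[OF _ keys_add] mon_eval_eq_prod_superset[of ?S \<alpha>]
        mon_eval_eq_prod_superset[of ?S \<beta>] lookup_add power_add prod.distrib)
qed

lemma mon_eval_zero [simp]: "mon_eval 0 a = 1"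
  by (simp add: mon_eval_def)

lemma mon_eval_single: "mon_eval (single i t) a = a i ^ t"
  by (cases "t = 0") (auto simp: mon_eval_def)

lemma meval_add: "meval (P + Q) a = meval P a + meval Q a"
proof -
  let ?S = "keys P \<union> keys Q"
  show ?thesis
    by (simp add: meval_eq_sum_superset[OF _ keys_add] meval_eq_sum_superset[of ?S P]
        meval_eq_sum_superset[of ?S Q] lookup_add distrib_right sum.distrib)
qed

lemma meval_zero [simp]: "meval 0 a = 0"
  by (simp add: meval_def)

lemma meval_single: "meval (single \<alpha> c) a = c * mon_eval \<alpha> a"
  by (subst meval_eq_sum_superset[of "{\<alpha>}"]) (auto simp: mon_eval_def)

lemma meval_sum: "meval (\<Sum>x\<in>A. f x) a = (\<Sum>x\<in>A. meval (f x) a)"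
  by (induction A rule: infinite_finite_induct) (auto simp: meval_add)

lemma meval_uminus: "meval (- P) a = - meval P a"
  by (metis add_eq_0_iff2 meval_add meval_zero)

lemma meval_diff: "meval (P - Q) a = meval P a - meval Q a"
  by (metis diff_conv_add_uminus meval_add meval_uminus)

lemma meval_mult: "meval (P * Q) a = meval P a * meval Q a"
proof -
  have "meval (P * Q) a = (\<Sum>\<alpha>\<in>keys P. \<Sum>\<beta>\<in>keys Q.
     lookup P \<alpha> * lookup Q \<beta> * (mon_eval \<alpha> a * mon_eval \<beta> a))"
    by (simp add: mpoly_mult_eq_sum_single meval_sum meval_single mon_eval_add)
  also have "\<dots> = meval P a * meval Q a"
    by (simp add: meval_eq_sum_mon_eval sum_product algebra_simps)
  finally show ?thesis .
qed

lemma meval_one [simp]: "meval 1 a = 1"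
  using meval_single[of 0 1 a] by simp

lemma meval_prod: "meval (\<Prod>x\<in>A. f x) a = (\<Prod>x\<in>A. meval (f x) a)"
  by (induction A rule: infinite_finite_induct) (auto simp: meval_mult)

lemma meval_power: "meval (f ^ e) a = meval f a ^ e"
  by (induction e) (auto simp: meval_mult)

lemma mpderiv_single_mult:
  "mpderiv i (single \<alpha> a * single \<beta> b) =
     mpderiv i (single \<alpha> a) * single \<beta> b + single \<alpha> a * mpderiv i (single \<beta> b)"
proof -
  have shift: "\<gamma> - single i 1 + \<delta> = \<gamma> + \<delta> - single i 1" if "lookup \<gamma> i \<noteq> 0" for \<gamma> \<delta> :: mon
    by (rule poly_mapping_eqI) (use that in \<open>auto simp: lookup_add lookup_minus lookup_single when_def\<close>)
  have "mpderiv i (single \<alpha> a * single \<beta> b) =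
     single (\<alpha> + \<beta> - single i 1) (a * b * of_nat (lookup \<alpha> i))
   + single (\<alpha> + \<beta> - single i 1) (a * b * of_nat (lookup \<beta> i))"
    by (simp add: mult_single mpderiv_single lookup_add algebra_simps flip: single_add)
  also have "\<dots> = mpderiv i (single \<alpha> a) * single \<beta> b + single \<alpha> a * mpderiv i (single \<beta> b)"
    using shift[of \<alpha> \<beta>] shift[of \<beta> \<alpha>]
    by (cases "lookup \<alpha> i = 0"; cases "lookup \<beta> i = 0")
       (simp_all add: mpderiv_single mult_single algebra_simps)
  finally show ?thesis .
qed

lemma mpderiv_mult: "mpderiv i (P * Q) = mpderiv i P * Q + P * mpderiv i Q"
proof -
  let ?P = "\<lambda>\<alpha>. single \<alpha> (lookup P \<alpha>)" and ?Q = "\<lambda>\<beta>. single \<beta> (lookup Q \<beta>)"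
  have "mpderiv i (P * Q) = mpderiv i ((\<Sum>\<alpha>\<in>keys P. ?P \<alpha>) * (\<Sum>\<beta>\<in>keys Q. ?Q \<beta>))"
    by (simp flip: mpoly_eq_sum_single)
  also have "\<dots> = (\<Sum>\<alpha>\<in>keys P. \<Sum>\<beta>\<in>keys Q. mpderiv i (?P \<alpha>) * ?Q \<beta> + ?P \<alpha> * mpderiv i (?Q \<beta>))"
    by (simp add: sum_product mpderiv_sum mpderiv_single_mult)
  also have "\<dots> = (\<Sum>\<alpha>\<in>keys P. mpderiv i (?P \<alpha>)) * (\<Sum>\<beta>\<in>keys Q. ?Q \<beta>)
     + (\<Sum>\<alpha>\<in>keys P. ?P \<alpha>) * (\<Sum>\<beta>\<in>keys Q. mpderiv i (?Q \<beta>))"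
    by (simp add: sum_product sum.distrib)
  also have "\<dots> = mpderiv i P * Q + P * mpderiv i Q"
    by (simp flip: mpoly_eq_sum_single mpderiv_sum)
  finally show ?thesis .
qed

lemma mpderiv_one [simp]: "mpderiv i 1 = 0"
  using mpderiv_single[of i 0 1] by simp

definition free_of_var :: "nat \<Rightarrow> mpoly \<Rightarrow> bool" where
  "free_of_var i P \<longleftrightarrow> (\<forall>\<alpha>\<in>keys P. lookup \<alpha> i = 0)"

lemma mpderiv_free_of_var: "free_of_var i P \<Longrightarrow> mpderiv i P = 0"
  unfolding free_of_var_def mpderiv_def by simp

lemma free_of_var_mult: "free_of_var i P \<Longrightarrow> free_of_var i Q \<Longrightarrow> free_of_var i (P * Q)"
  unfolding free_of_var_def using keys_mult[of P Q] by (force simp: lookup_add)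

lemma free_of_var_one: "free_of_var i 1"
  by (simp add: free_of_var_def)

lemma free_of_var_prod: "(\<And>x. x \<in> A \<Longrightarrow> free_of_var i (f x)) \<Longrightarrow> free_of_var i (\<Prod>x\<in>A. f x)"
  by (induction A rule: infinite_finite_induct) (auto intro: free_of_var_mult free_of_var_one)

lemma free_of_var_power: "free_of_var i P \<Longrightarrow> free_of_var i (P ^ e)"
  by (induction e) (auto intro: free_of_var_mult free_of_var_one)

lemma foldr_mpderiv_add: "foldr mpderiv is (P + Q) = foldr mpderiv is P + foldr mpderiv is Q"
  by (induction "is") (auto simp: mpderiv_add)

lemma foldr_mpderiv_uminus: "foldr mpderiv is (- P) = - foldr mpderiv is P"
  by (induction "is") (auto simp: mpderiv_uminus)

lemma foldr_mpderiv_zero: "foldr mpderiv is 0 = 0"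
  by (induction "is") auto

lemma zero_mult_ge_0 [simp]: "zero_mult_ge n 0 f a"
  by (simp add: zero_mult_ge_def)

lemma zero_mult_ge_Suc:
  "zero_mult_ge n (Suc s) f a \<longleftrightarrow> meval f a = 0 \<and> (\<forall>i<n. zero_mult_ge n s (mpderiv i f) a)"
proof
  assume h: "zero_mult_ge n (Suc s) f a"
  have "zero_mult_ge n s (mpderiv i f) a" if "i < n" for i
    unfolding zero_mult_ge_def
    using h[unfolded zero_mult_ge_def, rule_format, of "_ @ [i]"] that by simp
  then show "meval f a = 0 \<and> (\<forall>i<n. zero_mult_ge n s (mpderiv i f) a)"
    using h[unfolded zero_mult_ge_def, rule_format, of "[]"] by simp
next
  assume h: "meval f a = 0 \<and> (\<forall>i<n. zero_mult_ge n s (mpderiv i f) a)"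
  show "zero_mult_ge n (Suc s) f a"
    unfolding zero_mult_ge_def
  proof (intro allI impI)
    fix "is" :: "nat list" assume "length is < Suc s" "set is \<subseteq> {..<n}"
    then show "meval (foldr mpderiv is f) a = 0"
      using h by (cases "is" rule: rev_exhaust) (auto simp: zero_mult_ge_def)
  qed
qed

lemma zero_mult_ge_mono: "zero_mult_ge n t f a \<Longrightarrow> s \<le> t \<Longrightarrow> zero_mult_ge n s f a"
  unfolding zero_mult_ge_def by auto

lemma zero_mult_ge_add:
  "zero_mult_ge n s f a \<Longrightarrow> zero_mult_ge n s g a \<Longrightarrow> zero_mult_ge n s (f + g) a"
  unfolding zero_mult_ge_def by (simp add: foldr_mpderiv_add meval_add)

lemma zero_mult_ge_uminus: "zero_mult_ge n s f a \<Longrightarrow> zero_mult_ge n s (- f) a"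
  unfolding zero_mult_ge_def by (simp add: foldr_mpderiv_uminus meval_uminus)

lemma zero_mult_ge_diff:
  "zero_mult_ge n s f a \<Longrightarrow> zero_mult_ge n s g a \<Longrightarrow> zero_mult_ge n s (f - g) a"
  by (metis diff_conv_add_uminus zero_mult_ge_add zero_mult_ge_uminus)

lemma zero_mult_ge_zero [simp]: "zero_mult_ge n s 0 a"
  unfolding zero_mult_ge_def by (simp add: foldr_mpderiv_zero)

lemma zero_mult_ge_sum:
  "(\<And>x. x \<in> A \<Longrightarrow> zero_mult_ge n s (f x) a) \<Longrightarrow> zero_mult_ge n s (\<Sum>x\<in>A. f x) a"
  by (induction A rule: infinite_finite_induct) (auto intro: zero_mult_ge_add)

lemma zero_mult_ge_mult:
  "zero_mult_ge n s f a \<Longrightarrow> zero_mult_ge n t g a \<Longrightarrow> zero_mult_ge n (s + t) (f * g) a"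
proof (induction "s + t" arbitrary: s t f g)
  case 0
  then show ?case by simp
next
  case (Suc N)
  have "meval (f * g) a = 0"
    using Suc.prems Suc.hyps(2) by (cases s; cases t) (auto simp: zero_mult_ge_Suc meval_mult)
  moreover have "zero_mult_ge n N (mpderiv i f * g) a" if "i < n" for i
  proof (cases s)
    case 0
    then show ?thesis
      using Suc.prems Suc.hyps Suc.hyps(1)[of 0 N "mpderiv i f" g] zero_mult_ge_mono[of n t g a N] by simp
  next
    case (Suc s')
    then show ?thesis using Suc.prems Suc.hyps that by (auto simp: zero_mult_ge_Suc)
  qed
  moreover have "zero_mult_ge n N (f * mpderiv i g) a" if "i < n" for i
  proof (cases t)
    case 0
    then show ?thesis
      using Suc.prems Suc.hyps Suc.hyps(1)[of N 0 f "mpderiv i g"] zero_mult_ge_mono[of n s f a N] by simp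
  next
    case (Suc t')
    then show ?thesis using Suc.prems Suc.hyps that by (auto simp: zero_mult_ge_Suc)
  qed
  ultimately show ?case
    unfolding Suc.hyps(2)[symmetric] by (simp add: zero_mult_ge_Suc mpderiv_mult zero_mult_ge_add)
qed

lemma zero_mult_ge_mult_right: "zero_mult_ge n s f a \<Longrightarrow> zero_mult_ge n s (f * g) a"
  using zero_mult_ge_mult[of n s f a 0 g] by simp

lemma zero_mult_ge_prod:
  "finite S \<Longrightarrow> (\<And>x. x \<in> S \<Longrightarrow> zero_mult_ge n (s x) (f x) a) \<Longrightarrow>
     zero_mult_ge n (\<Sum>x\<in>S. s x) (\<Prod>x\<in>S. f x) a"
  by (induction S rule: finite_induct) (auto intro: zero_mult_ge_mult)

lemma zero_mult_ge_power: "zero_mult_ge n s f a \<Longrightarrow> zero_mult_ge n (e * s) (f ^ e) a"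
  by (induction e) (auto intro: zero_mult_ge_mult)

section \<open>The grid polynomials\<close>

definition mconst :: "real \<Rightarrow> mpoly" where
  "mconst c = single 0 c"

definition shifted_var :: "nat \<Rightarrow> real \<Rightarrow> mpoly" where
  "shifted_var i c = single (single i 1) 1 - mconst c"

definition grid_poly :: "nat \<Rightarrow> nat \<Rightarrow> mpoly" where
  "grid_poly m i = (\<Prod>j\<in>{0..m}. shifted_var i (real j))"

definition grid_poly_pos :: "nat \<Rightarrow> nat \<Rightarrow> mpoly" where
  "grid_poly_pos m i = (\<Prod>j\<in>{1..m}. shifted_var i (real j))"

definition grid_prod :: "nat \<Rightarrow> nat \<Rightarrow> (nat \<Rightarrow> nat) \<Rightarrow> mpoly" where
  "grid_prod m n q = (\<Prod>i<n. grid_poly m i ^ q i)"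

definition qsum :: "nat \<Rightarrow> (nat \<Rightarrow> nat) \<Rightarrow> nat" where
  "qsum n q = (\<Sum>i<n. q i)"

lemma mconst_mult_single: "mconst c * single \<alpha> d = single \<alpha> (c * d)"
  by (simp add: mconst_def mult_single)

lemma keys_mconst_mult: "keys (mconst c * P) \<subseteq> keys P"
  using keys_mult[of "mconst c" P] by (auto simp: mconst_def split: if_splits)

lemma meval_mconst [simp]: "meval (mconst c) a = c"
  by (simp add: mconst_def meval_single)

lemma mpderiv_mconst [simp]: "mpderiv i (mconst c) = 0"
  by (simp add: mconst_def mpderiv_single)

lemma meval_of_nat [simp]: "meval (of_nat e) a = of_nat e"
  by (induction e) (simp_all add: meval_add)

lemma meval_shifted_var [simp]: "meval (shifted_var i c) a = a i - c"
  by (simp add: shifted_var_def meval_diff meval_single mon_eval_single)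

lemma mpderiv_shifted_var: "mpderiv i (shifted_var j c) = (if i = j then 1 else 0)"
  by (auto simp: shifted_var_def mpderiv_diff mpderiv_single lookup_single)

lemma free_of_var_shifted_var: "i \<noteq> j \<Longrightarrow> free_of_var i (shifted_var j c)"
  using keys_diff[of "single (single j 1) (1::real)" "mconst c"]
  by (auto simp: free_of_var_def shifted_var_def mconst_def lookup_single split: if_splits)

lemma free_of_var_grid_poly: "i \<noteq> j \<Longrightarrow> free_of_var i (grid_poly m j)"
  unfolding grid_poly_def by (intro free_of_var_prod free_of_var_shifted_var)

lemma mpderiv_power: "mpderiv i (f ^ e) = of_nat e * f ^ (e - 1) * mpderiv i f"
proof -
  have "mpderiv i (f ^ Suc e) = of_nat (Suc e) * f ^ e * mpderiv i f" for e
    by (induction e) (simp_all add: mpderiv_mult algebra_simps)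
  then show ?thesis by (cases e) simp_all
qed

lemma meval_grid_poly_eq_0: "a i \<in> real ` {0..m} \<Longrightarrow> meval (grid_poly m i) a = 0"
  by (auto simp: grid_poly_def meval_prod)

lemma meval_mpderiv_grid_poly_neq_0:
  assumes "a i = real t" "t \<le> m"
  shows "meval (mpderiv i (grid_poly m i)) a \<noteq> 0"
proof -
  let ?rest = "\<Prod>j\<in>{0..m} - {t}. shifted_var i (real j)"
  have "grid_poly m i = shifted_var i (real t) * ?rest"
    unfolding grid_poly_def using assms by (simp add: prod.remove)
  then have "meval (mpderiv i (grid_poly m i)) a = (\<Prod>j\<in>{0..m} - {t}. real t - real j)"
    using assms by (simp add: mpderiv_mult meval_add meval_mult mpderiv_shifted_var meval_prod)
  also have "\<dots> \<noteq> 0" by auto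
  finally show ?thesis .
qed

lemma grid_prod_upd:
  assumes "i < n"
  shows "grid_prod m n (q(i := e)) = grid_poly m i ^ e * (\<Prod>j\<in>{..<n} - {i}. grid_poly m j ^ q j)"
proof -
  have "(\<Prod>j\<in>{..<n} - {i}. grid_poly m j ^ (q(i := e)) j) = (\<Prod>j\<in>{..<n} - {i}. grid_poly m j ^ q j)"
    by (rule prod.cong) auto
  with assms show ?thesis
    unfolding grid_prod_def by (simp add: prod.remove)
qed

lemma grid_prod_zero: "grid_prod m n (\<lambda>_. 0) = 1"
  by (simp add: grid_prod_def)

lemma grid_prod_incr: "i < n \<Longrightarrow> grid_prod m n (q(i := Suc (q i))) = grid_poly m i * grid_prod m n q"
  using grid_prod_upd[of i n m q "Suc (q i)"] grid_prod_upd[of i n m q "q i"] by simp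

lemma mpderiv_grid_prod:
  assumes "i < n"
  shows "mpderiv i (grid_prod m n q) =
    of_nat (q i) * mpderiv i (grid_poly m i) * grid_prod m n (q(i := q i - 1))"
proof -
  let ?R = "\<Prod>j\<in>{..<n} - {i}. grid_poly m j ^ q j"
  have "free_of_var i ?R"
    by (intro free_of_var_prod free_of_var_power free_of_var_grid_poly) auto
  then show ?thesis
    using grid_prod_upd[OF assms, of m q "q i"] grid_prod_upd[OF assms, of m q "q i - 1"]
    by (simp add: mpderiv_mult mpderiv_free_of_var mpderiv_power algebra_simps)
qed

lemma zero_mult_ge_grid_prod:
  assumes "a \<in> grid m n"
  shows "zero_mult_ge n (qsum n q) (grid_prod m n q) a"
proof -
  have "zero_mult_ge n (q i * 1) (grid_poly m i ^ q i) a" if "i < n" for i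
    using assms that
    by (intro zero_mult_ge_power) (simp add: zero_mult_ge_Suc meval_grid_poly_eq_0 grid_def)
  then show ?thesis
    unfolding grid_prod_def qsum_def
    using zero_mult_ge_prod[of "{..<n}" n "\<lambda>i. q i * 1" "\<lambda>i. grid_poly m i ^ q i" a] by simp
qed

lemma meval_grid_prod_on_grid:
  "a \<in> grid m n \<Longrightarrow> meval (grid_prod m n q) a = (if \<forall>i<n. q i = 0 then 1 else 0)"
  by (auto simp: grid_prod_def meval_prod meval_power meval_grid_poly_eq_0 grid_def)

lemma qsum_upd: "i < n \<Longrightarrow> qsum n (q(i := x)) + q i = qsum n q + x"
  unfolding qsum_def by (simp add: sum.remove)

lemma qsum_eq_0_iff: "qsum n q = 0 \<longleftrightarrow> (\<forall>i<n. q i = 0)"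
  unfolding qsum_def by auto

lemma mpderiv_grid_prod_sum:
  assumes "i < n"
  shows "mpderiv i (\<Sum>j\<in>J. grid_prod m n (q j) * \<psi> j) =
    (\<Sum>j\<in>J. grid_prod m n ((q j)(i := q j i - 1)) * (of_nat (q j i) * mpderiv i (grid_poly m i) * \<psi> j))
    + (\<Sum>j\<in>J. grid_prod m n (q j) * mpderiv i (\<psi> j))"
  by (simp add: mpderiv_sum mpderiv_mult mpderiv_grid_prod[OF assms] sum.distrib algebra_simps)

lemma eq_if_decr_eq:
  fixes q Q :: "nat \<Rightarrow> nat"
  assumes "i < n" "Q i > 0" "qsum n Q \<le> qsum n q" "q(i := q i - 1) = Q(i := Q i - 1)"
  shows "q = Q"
proof -
  have "q = Q(i := q i)"
    using assms(4) by (auto simp: fun_eq_iff split: if_splits)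
  then have "qsum n q + Q i = qsum n Q + q i"
    using qsum_upd[OF assms(1), of Q "q i"] by simp
  moreover have "q i - 1 = Q i - 1"
    using fun_cong[OF assms(4), of i] by simp
  ultimately have "q i = Q i"
    using assms(2,3) by linarith
  with \<open>q = Q(i := q i)\<close> show ?thesis by simp
qed

lemma meval_grid_prod_sum_on_grid:
  assumes "a \<in> grid m n" "finite J" "\<forall>j\<in>J. \<forall>i\<ge>n. q j i = 0"
  shows "meval (\<Sum>j\<in>J. grid_prod m n (q j) * \<psi> j) a = (\<Sum>j\<in>{j\<in>J. q j = (\<lambda>_. 0)}. meval (\<psi> j) a)"
proof -
  have "(\<forall>i<n. q j i = 0) \<longleftrightarrow> q j = (\<lambda>_. 0)" if "j \<in> J" for j
    using assms(3) that unfolding fun_eq_iff by (meson not_less)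
  then have "meval (\<Sum>j\<in>J. grid_prod m n (q j) * \<psi> j) a =
      (\<Sum>j\<in>J. if q j = (\<lambda>_. 0) then meval (\<psi> j) a else 0)"
    unfolding meval_sum meval_mult by (intro sum.cong) (auto simp: meval_grid_prod_on_grid[OF assms(1)])
  also have "\<dots> = (\<Sum>j\<in>{j\<in>J. q j = (\<lambda>_. 0)}. meval (\<psi> j) a)"
    using assms(2) by (simp add: sum.inter_filter)
  finally show ?thesis .
qed

text \<open>On the grid, the highest vanishing order of a combination of grid products detects the
  values of its coefficients: differentiating once in a variable \<open>x\<^sub>i\<close> lowers every exponent
  \<open>q i\<close> by one, at the price of a factor that does not vanish on the grid.\<close>

lemma grid_prod_sum_fibre_eval_eq_0:
  assumes "a \<in> grid m n" "finite J"
    and "\<forall>j\<in>J. s \<le> qsum n (q j) \<and> (\<forall>i\<ge>n. q j i = 0)"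
    and "zero_mult_ge n (Suc s) (\<Sum>j\<in>J. grid_prod m n (q j) * \<psi> j) a"
    and "qsum n Q = s" "\<forall>i\<ge>n. Q i = 0"
  shows "(\<Sum>j\<in>{j\<in>J. q j = Q}. meval (\<psi> j) a) = 0"
  using assms(3-)
proof (induction s arbitrary: q \<psi> Q)
  case 0
  have Q0: "Q = (\<lambda>_. 0)"
  proof
    fix i show "Q i = 0" using 0(3,4) qsum_eq_0_iff[of n Q] by (cases "i < n") auto
  qed
  have supp: "\<forall>j\<in>J. \<forall>i\<ge>n. q j i = 0"
    using 0(1) by blast
  have "meval (\<Sum>j\<in>J. grid_prod m n (q j) * \<psi> j) a = 0"
    using 0(2) by (simp add: zero_mult_ge_Suc)
  then show ?case
    unfolding meval_grid_prod_sum_on_grid[OF assms(1,2) supp] Q0 .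
next
  case (Suc s)
  obtain i where i: "i < n" "Q i > 0"
    using Suc.prems(3) qsum_eq_0_iff[of n Q] by auto
  define q' where "q' j = (q j)(i := q j i - 1)" for j
  define \<psi>' where "\<psi>' j = of_nat (q j i) * mpderiv i (grid_poly m i) * \<psi> j" for j
  define Q' where "Q' = Q(i := Q i - 1)"
  let ?F = "\<Sum>j\<in>J. grid_prod m n (q j) * \<psi> j"
  let ?E = "\<Sum>j\<in>J. grid_prod m n (q j) * mpderiv i (\<psi> j)"
  have "zero_mult_ge n (Suc s) (mpderiv i ?F) a"
    using Suc.prems(2) i(1) unfolding zero_mult_ge_Suc[of n "Suc s" ?F] by blast
  moreover have "zero_mult_ge n (Suc s) ?E a"
    using zero_mult_ge_grid_prod[OF assms(1)] Suc.prems(1)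
    by (intro zero_mult_ge_sum zero_mult_ge_mult_right) (blast intro: zero_mult_ge_mono)
  ultimately have "zero_mult_ge n (Suc s) (\<Sum>j\<in>J. grid_prod m n (q' j) * \<psi>' j) a"
    using zero_mult_ge_diff mpderiv_grid_prod_sum[OF i(1), of m q \<psi> J]
    unfolding q'_def \<psi>'_def by fastforce
  moreover have "s \<le> qsum n (q' j) \<and> (\<forall>i\<ge>n. q' j i = 0)" if "j \<in> J" for j
  proof -
    have "qsum n (q' j) + q j i = qsum n (q j) + (q j i - 1)"
      unfolding q'_def by (rule qsum_upd[OF i(1)])
    then show ?thesis
      using Suc.prems(1) that i(1) by (auto simp: q'_def)
  qed
  moreover have "qsum n Q' = s" "\<forall>i\<ge>n. Q' i = 0"
    using qsum_upd[OF i(1), of Q "Q i - 1"] Suc.prems(3,4) i unfolding Q'_def by auto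
  ultimately have "(\<Sum>j\<in>{j\<in>J. q' j = Q'}. meval (\<psi>' j) a) = 0"
    using Suc.IH[of q' \<psi>' Q'] by blast
  moreover have "{j\<in>J. q' j = Q'} = {j\<in>J. q j = Q}"
    using eq_if_decr_eq[of i n Q, OF i] Suc.prems(1,3) unfolding q'_def Q'_def by fastforce
  ultimately have "real (Q i) * meval (mpderiv i (grid_poly m i)) a * (\<Sum>j\<in>{j\<in>J. q j = Q}. meval (\<psi> j) a) = 0"
    by (simp add: \<psi>'_def meval_mult sum_distrib_left mult.assoc)
  moreover obtain t where "a i = real t" "t \<le> m"
    using assms(1) i(1) unfolding grid_def by auto
  ultimately show ?case
    using i(2) meval_mpderiv_grid_poly_neq_0 by simp
qed

section \<open>Polynomials of degree at most \<open>m\<close> in each variable\<close>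

definition box :: "nat \<Rightarrow> nat \<Rightarrow> mon set" where
  "box m n = {r. keys r \<subseteq> {..<n} \<and> (\<forall>i. lookup r i \<le> m)}"

definition box_top :: "nat \<Rightarrow> nat \<Rightarrow> mon" where
  "box_top m n = (\<Sum>i<n. single i m)"

lemma box_0: "box m 0 = {0}"
  by (auto simp: box_def)

lemma box_Suc: "box m (Suc n) = (\<lambda>(r, t). r + single n t) ` (box m n \<times> {..m})"
proof (intro set_eqI iffI)
  fix r assume r: "r \<in> box m (Suc n)"
  define r' where "r' = r - single n (lookup r n)"
  have "r = r' + single n (lookup r n)"
    by (rule poly_mapping_eqI) (auto simp: r'_def lookup_add lookup_minus lookup_single when_def)
  moreover have "r' \<in> box m n"
  proof -
    have "x < n" if "x \<in> keys r'" for x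
    proof -
      have "x \<noteq> n" "lookup r x \<noteq> 0"
        using that by (auto simp: r'_def in_keys_iff lookup_minus lookup_single when_def split: if_splits)
      moreover from this(2) have "x \<in> keys r"
        by (simp add: in_keys_iff)
      ultimately show "x < n"
        using r by (auto simp: box_def less_Suc_eq)
    qed
    moreover have "lookup r' i \<le> m" for i
      using r by (auto simp: box_def r'_def lookup_minus intro: le_trans[OF diff_le_self])
    ultimately show ?thesis by (auto simp: box_def)
  qed
  moreover have "lookup r n \<le> m"
    using r by (simp add: box_def)
  ultimately show "r \<in> (\<lambda>(r, t). r + single n t) ` (box m n \<times> {..m})"
    by force
next
  fix r assume "r \<in> (\<lambda>(r, t). r + single n t) ` (box m n \<times> {..m})"
  then obtain r' t where r: "r = r' + single n t" "r' \<in> box m n" "t \<le> m"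
    by auto
  then have "lookup r' n = 0"
    by (auto simp: box_def in_keys_iff)
  with r show "r \<in> box m (Suc n)"
    using keys_add[of r' "single n t"]
    by (auto simp: box_def lookup_add lookup_single when_def split: if_splits)
qed

lemma inj_on_box_Suc: "inj_on (\<lambda>(r, t). r + single n t) (box m n \<times> {..m})"
proof (rule inj_onI, clarify)
  fix r t r' t'
  assume h: "r \<in> box m n" "r' \<in> box m n" "r + single n t = r' + single n t'"
  have "lookup r n = 0" "lookup r' n = 0"
    using h(1,2) by (auto simp: box_def in_keys_iff)
  then have "t = t'"
    using arg_cong[OF h(3), of "\<lambda>p. lookup p n"] by (simp add: lookup_add)
  with h(3) show "r = r' \<and> t = t'" by simp
qed

lemma finite_box: "finite (box m n)"
  by (induction n) (auto simp: box_0 box_Suc)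

lemma box_top_Suc: "box_top m (Suc n) = box_top m n + single n m"
  by (simp add: box_top_def)

lemma sum_box_Suc:
  "(\<Sum>r\<in>box m (Suc n). f r) = (\<Sum>t\<le>m. \<Sum>r\<in>box m n. f (r + single n t))"
proof -
  have "(\<Sum>r\<in>box m (Suc n). f r) = (\<Sum>x\<in>box m n \<times> {..m}. f ((\<lambda>(r, t). r + single n t) x))"
    unfolding box_Suc by (simp add: sum.reindex[OF inj_on_box_Suc])
  also have "\<dots> = (\<Sum>r\<in>box m n. \<Sum>t\<le>m. f (r + single n t))"
    by (simp add: sum.cartesian_product split_def)
  also have "\<dots> = (\<Sum>t\<le>m. \<Sum>r\<in>box m n. f (r + single n t))"
    by (rule sum.swap)
  finally show ?thesis .
qed

lemma zero_in_grid: "(\<lambda>_. 0) \<in> grid m n"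
  by (auto simp: grid_def)

lemma grid_0: "grid m 0 = {\<lambda>_. 0}"
  by (auto simp: grid_def)

lemma grid_upd: "a \<in> grid m n \<Longrightarrow> x \<in> real ` {0..m} \<Longrightarrow> a(n := x) \<in> grid m (Suc n)"
  by (auto simp: grid_def less_Suc_eq)

lemma grid_upd_neq_0: "a \<in> grid m n \<Longrightarrow> a \<noteq> (\<lambda>_. 0) \<Longrightarrow> a(n := x) \<noteq> (\<lambda>_. 0)"
  by (auto simp: grid_def fun_eq_iff split: if_splits)

lemma sum_box_Suc_eval:
  assumes "a \<in> grid m n"
  shows "(\<Sum>r\<in>box m (Suc n). c r * mon_eval r (a(n := x))) =
     (\<Sum>t\<le>m. (\<Sum>r\<in>box m n. c (r + single n t) * mon_eval r a) * x ^ t)"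
proof -
  have "mon_eval r (a(n := x)) = mon_eval r a" if "r \<in> box m n" for r
    using that unfolding mon_eval_def box_def by (intro prod.cong) auto
  then show ?thesis
    unfolding sum_box_Suc
    by (intro sum.cong refl) (auto simp: mon_eval_add mon_eval_single sum_distrib_right mult.assoc)
qed

lemma coeffs_eq_0_if_many_roots:
  fixes b :: "nat \<Rightarrow> real"
  assumes "finite X" "card X > d" "\<And>x. x \<in> X \<Longrightarrow> (\<Sum>t\<le>d. b t * x ^ t) = 0"
  shows "\<forall>t\<le>d. b t = 0"
proof -
  define p where "p = (\<Sum>t\<le>d. monom (b t) t)"
  have eval: "poly p x = (\<Sum>t\<le>d. b t * x ^ t)" for x
    by (simp add: p_def poly_sum poly_monom)
  have "p = 0"
  proof (rule ccontr)
    assume "p \<noteq> 0"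
    then have "card X \<le> card {x. poly p x = 0}"
      using assms(3) by (intro card_mono poly_roots_finite) (auto simp: eval)
    also have "\<dots> \<le> degree p"
      using \<open>p \<noteq> 0\<close> by (rule card_poly_roots_bound)
    also have "\<dots> \<le> d"
      unfolding p_def by (intro degree_sum_le) (auto intro: order.trans[OF degree_monom_le])
    finally show False using assms(2) by linarith
  qed
  moreover have "coeff p t = (if t \<le> d then b t else 0)" for t
    by (simp add: p_def coeff_sum coeff_monom)
  ultimately show ?thesis
    by (metis coeff_0)
qed

lemma coeffs_eq_0_if_vanish_on_range:
  fixes b :: "nat \<Rightarrow> real"
  assumes "\<And>x. x \<in> real ` {0..m} \<Longrightarrow> (\<Sum>t\<le>m. b t * x ^ t) = 0" "t \<le> m"
  shows "b t = 0"
  using coeffs_eq_0_if_many_roots[of "real ` {0..m}" m b] assms by (auto simp: card_image)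

lemma coeffs_eq_0_if_vanish_on_pos_range:
  fixes b :: "nat \<Rightarrow> real"
  assumes "b m = 0" "\<And>x. x \<in> real ` {1..m} \<Longrightarrow> (\<Sum>t\<le>m. b t * x ^ t) = 0" "t \<le> m"
  shows "b t = 0"
proof (cases m)
  case (Suc d)
  have "(\<Sum>t\<le>d. b t * x ^ t) = 0" if "x \<in> real ` {1..m}" for x
    using assms(1) assms(2)[OF that] Suc by simp
  then have "\<forall>t\<le>d. b t = 0"
    using coeffs_eq_0_if_many_roots[of "real ` {1..m}" d b] Suc by (auto simp: card_image)
  with assms(1,3) Suc show ?thesis
    by (metis le_SucE)
qed (use assms in simp)
lemma box_coeffs_eq_0_if_vanish_on_grid:
  "(\<forall>a\<in>grid m n. (\<Sum>r\<in>box m n. c r * mon_eval r a) = 0) \<Longrightarrow> r \<in> box m n \<Longrightarrow> c r = 0"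
proof (induction n arbitrary: c r)
  case 0
  then show ?case by (simp add: box_0 grid_0)
next
  case (Suc n)
  have "(\<Sum>r\<in>box m n. c (r + single n t) * mon_eval r a) = 0" if "a \<in> grid m n" "t \<le> m" for a t
  proof (rule coeffs_eq_0_if_vanish_on_range[of m "\<lambda>t. \<Sum>r\<in>box m n. c (r + single n t) * mon_eval r a", OF _ that(2)])
    fix x assume "x \<in> real ` {0..m}"
    then have "(\<Sum>r\<in>box m (Suc n). c r * mon_eval r (a(n := x))) = 0"
      using Suc.prems(1) grid_upd[OF \<open>a \<in> grid m n\<close>] by blast
    then show "(\<Sum>t\<le>m. (\<Sum>r\<in>box m n. c (r + single n t) * mon_eval r a) * x ^ t) = 0"
      unfolding sum_box_Suc_eval[OF \<open>a \<in> grid m n\<close>] .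
  qed
  then have "c (r + single n t) = 0" if "r \<in> box m n" "t \<le> m" for r t
    using Suc.IH[of "\<lambda>r. c (r + single n t)"] that by blast
  then show ?case
    using Suc.prems(2) unfolding box_Suc by auto
qed

lemma box_coeffs_eq_0_if_vanish_off_origin:
  "(\<forall>a\<in>grid m n - {\<lambda>_. 0}. (\<Sum>r\<in>box m n. c r * mon_eval r a) = 0) \<Longrightarrow> c (box_top m n) = 0 \<Longrightarrow>
     r \<in> box m n \<Longrightarrow> c r = 0"
proof (induction n arbitrary: c r)
  case 0
  then show ?case by (simp add: box_0 box_top_def)
next
  case (Suc n)
  define S where "S t a = (\<Sum>r\<in>box m n. c (r + single n t) * mon_eval r a)" for t a
  have eval: "(\<Sum>r\<in>box m (Suc n). c r * mon_eval r (a(n := x))) = (\<Sum>t\<le>m. S t a * x ^ t)"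
    if "a \<in> grid m n" for a x
    unfolding S_def by (rule sum_box_Suc_eval[OF that])
  have off_origin: "S t a = 0" if "a \<in> grid m n" "a \<noteq> (\<lambda>_. 0)" "t \<le> m" for a t
  proof (rule coeffs_eq_0_if_vanish_on_range[of m "\<lambda>t. S t a", OF _ that(3)])
    fix x assume "x \<in> real ` {0..m}"
    then have "a(n := x) \<in> grid m (Suc n) - {\<lambda>_. 0}"
      using grid_upd[OF that(1)] grid_upd_neq_0[OF that(1,2)] by blast
    then show "(\<Sum>t\<le>m. S t a * x ^ t) = 0"
      using Suc.prems(1) unfolding eval[OF that(1), symmetric] by blast
  qed
  have top: "c (r + single n m) = 0" if "r \<in> box m n" for r
  proof (rule Suc.IH[OF _ _ that])
    show "\<forall>a\<in>grid m n - {\<lambda>_. 0}. (\<Sum>r\<in>box m n. c (r + single n m) * mon_eval r a) = 0"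
      using off_origin unfolding S_def by blast
    show "c (box_top m n + single n m) = 0"
      using Suc.prems(2) by (simp add: box_top_Suc)
  qed
  have origin: "S t (\<lambda>_. 0) = 0" if "t \<le> m" for t
  proof (rule coeffs_eq_0_if_vanish_on_pos_range[of "\<lambda>t. S t (\<lambda>_. 0)", OF _ _ that])
    show "S m (\<lambda>_. 0) = 0"
      using top by (simp add: S_def)
    fix x assume "x \<in> real ` {1..m}"
    then have "(\<lambda>_. 0::real)(n := x) \<in> grid m (Suc n) - {\<lambda>_. 0}"
      using grid_upd[OF zero_in_grid, of x] by (auto simp: fun_eq_iff)
    then show "(\<Sum>t\<le>m. S t (\<lambda>_. 0) * x ^ t) = 0"
      using Suc.prems(1) unfolding eval[OF zero_in_grid, symmetric] by blast
  qed
  have "c (r + single n t) = 0" if "r \<in> box m n" "t \<le> m" for r t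
  proof (rule box_coeffs_eq_0_if_vanish_on_grid[OF _ that(1)])
    have "S t a = 0" if "a \<in> grid m n" for a
      using off_origin[OF that] origin \<open>t \<le> m\<close> by (cases "a = (\<lambda>_. 0)") auto
    then show "\<forall>a\<in>grid m n. (\<Sum>r\<in>box m n. c (r + single n t) * mon_eval r a) = 0"
      unfolding S_def by blast
  qed
  then show ?case
    using Suc.prems(3) unfolding box_Suc by auto
qed

lemma meval_eq_sum_box:
  "keys f \<subseteq> box m n \<Longrightarrow> meval f a = (\<Sum>r\<in>box m n. lookup f r * mon_eval r a)"
  unfolding meval_eq_sum_mon_eval
  by (rule sum.mono_neutral_left) (auto simp: finite_box in_keys_iff)

lemma box_poly_eq_0I:
  assumes "keys f \<subseteq> box m n" "\<And>r. r \<in> box m n \<Longrightarrow> lookup f r = 0"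
  shows "f = 0"
proof (rule poly_mapping_eqI)
  fix r
  show "lookup f r = lookup 0 r"
    using assms by (cases "r \<in> box m n") (auto simp: in_keys_iff)
qed

lemma box_poly_eq_0_if_vanish_on_grid:
  assumes "keys f \<subseteq> box m n" "\<forall>a\<in>grid m n. meval f a = 0"
  shows "f = 0"
  using assms box_coeffs_eq_0_if_vanish_on_grid[of m n "lookup f"]
  by (intro box_poly_eq_0I[OF assms(1)]) (simp add: meval_eq_sum_box)

lemma box_poly_eq_0_if_vanish_off_origin:
  assumes "keys f \<subseteq> box m n" "lookup f (box_top m n) = 0" "\<forall>a\<in>grid m n - {\<lambda>_. 0}. meval f a = 0"
  shows "f = 0"
  using assms box_coeffs_eq_0_if_vanish_off_origin[of m n "lookup f"]
  by (intro box_poly_eq_0I[OF assms(1)]) (simp add: meval_eq_sum_box)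

lemma mon_deg_eq_sum_superset:
  "finite S \<Longrightarrow> keys \<alpha> \<subseteq> S \<Longrightarrow> mon_deg \<alpha> = (\<Sum>v\<in>S. lookup \<alpha> v)"
  unfolding mon_deg_def by (rule sum.mono_neutral_left) (auto simp: in_keys_iff)

lemma mon_deg_eq_sum_lessThan: "keys \<alpha> \<subseteq> {..<n} \<Longrightarrow> mon_deg \<alpha> = (\<Sum>v<n. lookup \<alpha> v)"
  by (rule mon_deg_eq_sum_superset) auto

lemma mon_deg_add: "mon_deg (\<alpha> + \<beta>) = mon_deg \<alpha> + mon_deg \<beta>"
proof -
  let ?S = "keys \<alpha> \<union> keys \<beta>"
  show ?thesis
    by (simp add: mon_deg_eq_sum_superset[OF _ keys_add] mon_deg_eq_sum_superset[of ?S \<alpha>]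
        mon_deg_eq_sum_superset[of ?S \<beta>] lookup_add sum.distrib)
qed

lemma mon_deg_zero [simp]: "mon_deg 0 = 0"
  by (simp add: mon_deg_def)

lemma mon_deg_single [simp]: "mon_deg (single i t) = t"
  by (cases "t = 0") (auto simp: mon_deg_def)

lemma mon_deg_mono: "(\<And>v. lookup \<alpha> v \<le> lookup \<beta> v) \<Longrightarrow> mon_deg \<alpha> \<le> mon_deg \<beta>"
  by (simp add: mon_deg_eq_sum_superset[of "keys \<alpha> \<union> keys \<beta>" \<alpha>]
      mon_deg_eq_sum_superset[of "keys \<alpha> \<union> keys \<beta>" \<beta>] sum_mono)

lemma mdeg_le_iff: "mdeg P \<le> d \<longleftrightarrow> (\<forall>\<gamma>\<in>keys P. mon_deg \<gamma> \<le> d)"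
  by (simp add: mdeg_def)

lemma mvars_subset_iff: "mvars P \<subseteq> V \<longleftrightarrow> (\<forall>\<gamma>\<in>keys P. keys \<gamma> \<subseteq> V)"
  by (auto simp: mvars_def)

definition exps_le :: "(nat \<Rightarrow> nat) \<Rightarrow> mpoly \<Rightarrow> bool" where
  "exps_le f P \<longleftrightarrow> (\<forall>\<gamma>\<in>keys P. \<forall>v. lookup \<gamma> v \<le> f v)"

lemma exps_le_one: "exps_le (\<lambda>_. 0) 1"
  by (simp add: exps_le_def)

lemma exps_le_mult: "exps_le f A \<Longrightarrow> exps_le g B \<Longrightarrow> exps_le (\<lambda>v. f v + g v) (A * B)"
  unfolding exps_le_def using keys_mult[of A B] by (force simp: lookup_add intro: add_mono)

lemma exps_le_power: "exps_le f A \<Longrightarrow> exps_le (\<lambda>v. e * f v) (A ^ e)"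
proof (induction e)
  case 0
  then show ?case using exps_le_one by simp
next
  case (Suc e)
  then have "exps_le (\<lambda>v. f v + e * f v) (A * A ^ e)"
    by (intro exps_le_mult)
  then show ?case by simp
qed

lemma exps_le_prod:
  "finite S \<Longrightarrow> (\<And>x. x \<in> S \<Longrightarrow> exps_le (f x) (P x)) \<Longrightarrow> exps_le (\<lambda>v. \<Sum>x\<in>S. f x v) (\<Prod>x\<in>S. P x)"
proof (induction S rule: finite_induct)
  case empty
  then show ?case using exps_le_one by simp
next
  case (insert x S)
  then have "exps_le (\<lambda>v. f x v + (\<Sum>x\<in>S. f x v)) (P x * (\<Prod>x\<in>S. P x))"
    by (intro exps_le_mult) auto
  then show ?case using insert by simp
qed

definition lead_mon :: "mon \<Rightarrow> mpoly \<Rightarrow> bool" where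
  "lead_mon \<alpha> P \<longleftrightarrow> (\<forall>\<gamma>\<in>keys (P - single \<alpha> 1). (\<forall>v. lookup \<gamma> v \<le> lookup \<alpha> v) \<and> mon_deg \<gamma> < mon_deg \<alpha>)"

lemma lead_mon_lower_terms:
  "lead_mon \<alpha> P \<Longrightarrow> \<gamma> \<in> keys (single \<alpha> 1 - P) \<Longrightarrow> (\<forall>v. lookup \<gamma> v \<le> lookup \<alpha> v) \<and> mon_deg \<gamma> < mon_deg \<alpha>"
  unfolding lead_mon_def by (metis keys_minus minus_diff_eq)

lemma exps_le_if_lead_mon: "lead_mon \<alpha> P \<Longrightarrow> exps_le (lookup \<alpha>) P"
proof -
  assume h: "lead_mon \<alpha> P"
  have "keys P \<subseteq> keys (P - single \<alpha> 1) \<union> {\<alpha>}"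
    using keys_add[of "P - single \<alpha> 1" "single \<alpha> 1"] by auto
  then show ?thesis
    using h unfolding lead_mon_def exps_le_def by blast
qed

lemma lead_mon_mult:
  assumes A: "lead_mon \<alpha> A" and B: "lead_mon \<beta> B"
  shows "lead_mon (\<alpha> + \<beta>) (A * B)"
  unfolding lead_mon_def
proof
  let ?x\<alpha> = "single \<alpha> (1::real)" and ?x\<beta> = "single \<beta> (1::real)"
  fix \<gamma> assume "\<gamma> \<in> keys (A * B - single (\<alpha> + \<beta>) 1)"
  moreover have "A * B - single (\<alpha> + \<beta>) 1 = (A - ?x\<alpha>) * B + ?x\<alpha> * (B - ?x\<beta>)"
    by (simp add: mult_single algebra_simps)
  ultimately have "\<gamma> \<in> keys ((A - ?x\<alpha>) * B) \<union> keys (?x\<alpha> * (B - ?x\<beta>))"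
    using keys_add[of "(A - ?x\<alpha>) * B" "?x\<alpha> * (B - ?x\<beta>)"] by auto
  then show "(\<forall>v. lookup \<gamma> v \<le> lookup (\<alpha> + \<beta>) v) \<and> mon_deg \<gamma> < mon_deg (\<alpha> + \<beta>)"
  proof
    assume "\<gamma> \<in> keys ((A - ?x\<alpha>) * B)"
    then obtain g d where gd: "\<gamma> = g + d" "g \<in> keys (A - ?x\<alpha>)" "d \<in> keys B"
      using keys_mult[of "A - ?x\<alpha>" B] by blast
    have "\<forall>v. lookup g v \<le> lookup \<alpha> v" "mon_deg g < mon_deg \<alpha>"
      using A gd(2) unfolding lead_mon_def by auto
    moreover have "\<forall>v. lookup d v \<le> lookup \<beta> v"
      using exps_le_if_lead_mon[OF B] gd(3) unfolding exps_le_def by auto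
    moreover from this have "mon_deg d \<le> mon_deg \<beta>"
      by (intro mon_deg_mono) auto
    ultimately show ?thesis
      using gd(1) by (auto simp: lookup_add mon_deg_add intro: add_mono)
  next
    assume "\<gamma> \<in> keys (?x\<alpha> * (B - ?x\<beta>))"
    then obtain d where "\<gamma> = \<alpha> + d" "d \<in> keys (B - ?x\<beta>)"
      using keys_mult[of ?x\<alpha> "B - ?x\<beta>"] by auto
    then show ?thesis
      using B unfolding lead_mon_def by (auto simp: lookup_add mon_deg_add)
  qed
qed

lemma lead_mon_one: "lead_mon 0 1"
  by (simp add: lead_mon_def)

lemma lead_mon_prod:
  "finite S \<Longrightarrow> (\<And>x. x \<in> S \<Longrightarrow> lead_mon (\<alpha> x) (P x)) \<Longrightarrow> lead_mon (\<Sum>x\<in>S. \<alpha> x) (\<Prod>x\<in>S. P x)"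
  by (induction S rule: finite_induct) (auto intro: lead_mon_mult lead_mon_one)

lemma lead_mon_shifted_var: "lead_mon (single i 1) (shifted_var i c)"
proof -
  have "shifted_var i c - single (single i 1) 1 = single 0 (- c)"
    by (simp add: shifted_var_def mconst_def single_uminus)
  then show ?thesis
    unfolding lead_mon_def by (auto split: if_splits)
qed

lemma lead_mon_shifted_var_prod: "lead_mon (single i (card S)) (\<Prod>j\<in>S. shifted_var i (c j))"
proof (cases "finite S")
  case True
  then have "lead_mon (\<Sum>j\<in>S. single i 1) (\<Prod>j\<in>S. shifted_var i (c j))"
    by (intro lead_mon_prod lead_mon_shifted_var)
  moreover have "(\<Sum>j\<in>S. single i (1::nat)) = single i (card S)"
    by (rule poly_mapping_eqI) (unfold lookup_sum, simp add: lookup_single when_def)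
  ultimately show ?thesis by simp
qed (simp add: lead_mon_def)

lemma lead_mon_grid_poly: "lead_mon (single i (Suc m)) (grid_poly m i)"
  using lead_mon_shifted_var_prod[of i "{0..m}" real] by (simp add: grid_poly_def)

lemma lead_mon_grid_poly_pos: "lead_mon (single i m) (grid_poly_pos m i)"
  using lead_mon_shifted_var_prod[of i "{1..m}" real] by (simp add: grid_poly_pos_def)

lemma exps_le_grid_prod:
  assumes "\<forall>v\<ge>n. q v = 0"
  shows "exps_le (\<lambda>v. Suc m * q v) (grid_prod m n q)"
proof -
  have "exps_le (\<lambda>v. \<Sum>i<n. q i * lookup (single i (Suc m)) v) (grid_prod m n q)"
    unfolding grid_prod_def by (intro exps_le_prod exps_le_power exps_le_if_lead_mon lead_mon_grid_poly) auto
  moreover have "(\<Sum>i<n. q i * lookup (single i (Suc m)) v) = Suc m * q v" for v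
  proof -
    have "(\<Sum>i<n. q i * lookup (single i (Suc m)) v) = (\<Sum>i\<in>{..<n}. if i = v then q i * Suc m else 0)"
      by (rule sum.cong) (auto simp: lookup_single when_def)
    also have "\<dots> = Suc m * q v"
      using assms by (cases "v < n") auto
    finally show ?thesis .
  qed
  ultimately show ?thesis by simp
qed

lemma single_minus_grid_poly_eq_sum:
  obtains d where "single (single i (Suc m)) 1 - grid_poly m i = (\<Sum>t\<le>m. single (single i t) (d t))"
proof -
  let ?D = "single (single i (Suc m)) 1 - grid_poly m i"
  have "\<gamma> \<in> (\<lambda>t. single i t) ` {..m}" if "\<gamma> \<in> keys ?D" for \<gamma>
  proof -
    have h: "\<forall>v. lookup \<gamma> v \<le> lookup (single i (Suc m)) v" "mon_deg \<gamma> < Suc m"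
      using lead_mon_lower_terms[OF lead_mon_grid_poly that] by auto
    have "\<gamma> = single i (lookup \<gamma> i)"
    proof (rule poly_mapping_eqI)
      fix v show "lookup \<gamma> v = lookup (single i (lookup \<gamma> i)) v"
        using h(1)[rule_format, of v] by (cases "v = i") (auto simp: lookup_single)
    qed
    with h(2) show ?thesis
      by (metis atMost_iff image_eqI less_Suc_eq_le mon_deg_single)
  qed
  then have "?D = (\<Sum>\<alpha>\<in>(\<lambda>t. single i t) ` {..m}. single \<alpha> (lookup ?D \<alpha>))"
    by (intro mpoly_eq_sum_single_superset) auto
  also have "\<dots> = (\<Sum>t\<le>m. single (single i t) (lookup ?D (single i t)))"
    by (subst sum.reindex[OF inj_on_subset[OF inj_single subset_UNIV]]) simp
  finally show ?thesis by (rule that)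
qed

definition grid_prod_pos :: "nat \<Rightarrow> nat \<Rightarrow> mpoly" where
  "grid_prod_pos m n = (\<Prod>i<n. grid_poly_pos m i)"

lemma lookup_box_top: "lookup (box_top m n) v = (if v < n then m else 0)"
  unfolding box_top_def by (simp add: lookup_sum lookup_single when_def)

lemma keys_box_top: "keys (box_top m n) \<subseteq> {..<n}"
  by (auto simp: in_keys_iff lookup_box_top split: if_splits)

lemma mon_deg_box_top: "mon_deg (box_top m n) = m * n"
  by (subst mon_deg_eq_sum_lessThan[OF keys_box_top]) (simp add: lookup_box_top)

lemma mon_deg_box_le:
  assumes "r \<in> box m n"
  shows "mon_deg r \<le> m * n"
proof -
  have "mon_deg r = (\<Sum>v<n. lookup r v)"
    using assms by (intro mon_deg_eq_sum_lessThan) (auto simp: box_def)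
  also have "\<dots> \<le> (\<Sum>v<n. m)"
    using assms by (intro sum_mono) (auto simp: box_def)
  finally show ?thesis by (simp add: mult.commute)
qed

lemma mon_deg_box_less:
  assumes "r \<in> box m n" "r \<noteq> box_top m n"
  shows "mon_deg r < m * n"
proof (rule ccontr)
  assume "\<not> mon_deg r < m * n"
  then have "(\<Sum>v<n. lookup r v) = (\<Sum>v<n. m)"
    using assms(1) mon_deg_box_le[OF assms(1)] mon_deg_eq_sum_lessThan[of r n] by (auto simp: box_def mult.commute)
  then have "\<forall>v<n. lookup r v = m"
    using sum_mono_inv[of "lookup r" "{..<n}" "\<lambda>_. m"] assms(1) by (auto simp: box_def)
  then have "r = box_top m n"
    using assms(1) by (intro poly_mapping_eqI) (auto simp: lookup_box_top box_def in_keys_iff)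
  with assms(2) show False ..
qed

lemma lead_mon_grid_prod_pos: "lead_mon (box_top m n) (grid_prod_pos m n)"
  unfolding grid_prod_pos_def box_top_def by (intro lead_mon_prod lead_mon_grid_poly_pos) auto

lemma meval_grid_prod_pos_off_origin:
  assumes "a \<in> grid m n - {\<lambda>_. 0}"
  shows "meval (grid_prod_pos m n) a = 0"
proof -
  obtain i where "a i \<noteq> 0"
    using assms by (auto simp: fun_eq_iff)
  moreover from this have "i < n"
    using assms by (auto simp: grid_def not_less)
  moreover from this obtain t where "a i = real t" "t \<le> m"
    using assms unfolding grid_def by auto
  ultimately have "meval (grid_poly_pos m i) a = 0"
    by (auto simp: grid_poly_pos_def meval_prod)
  with \<open>i < n\<close> show ?thesis
    by (auto simp: grid_prod_pos_def meval_prod)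
qed

section \<open>Expanding monomials in grid products\<close>

definition expansion_poly :: "nat \<Rightarrow> nat \<Rightarrow> ((nat \<Rightarrow> nat) \<times> mon \<times> real) list \<Rightarrow> mpoly" where
  "expansion_poly m n xs = (\<Sum>(q, r, c)\<leftarrow>xs. grid_prod m n q * single r c)"

definition admissible_term :: "nat \<Rightarrow> nat \<Rightarrow> mon \<Rightarrow> (nat \<Rightarrow> nat) \<times> mon \<times> real \<Rightarrow> bool" where
  "admissible_term m n \<beta> e \<longleftrightarrow> (case e of (q, r, c) \<Rightarrow>
     r \<in> box m n \<and> (\<forall>i\<ge>n. q i = 0) \<and> (\<forall>i. Suc m * q i + lookup r i \<le> lookup \<beta> i))"

definition has_expansion :: "nat \<Rightarrow> nat \<Rightarrow> mon \<Rightarrow> mpoly \<Rightarrow> bool" where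
  "has_expansion m n \<beta> P \<longleftrightarrow> (\<exists>xs. P = expansion_poly m n xs \<and> (\<forall>e\<in>set xs. admissible_term m n \<beta> e))"

lemma expansion_poly_append: "expansion_poly m n (xs @ ys) = expansion_poly m n xs + expansion_poly m n ys"
  by (simp add: expansion_poly_def)

lemma has_expansion_zero: "has_expansion m n \<beta> 0"
  unfolding has_expansion_def by (intro exI[of _ "[]"]) (simp add: expansion_poly_def)

lemma has_expansion_add:
  assumes "has_expansion m n \<beta> P" "has_expansion m n \<beta> Q"
  shows "has_expansion m n \<beta> (P + Q)"
proof -
  obtain xs ys where "P = expansion_poly m n xs" "Q = expansion_poly m n ys"
    "\<forall>e\<in>set xs \<union> set ys. admissible_term m n \<beta> e"
    using assms unfolding has_expansion_def by auto
  then show ?thesis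
    unfolding has_expansion_def by (intro exI[of _ "xs @ ys"]) (simp add: expansion_poly_append)
qed

lemma has_expansion_sum:
  "(\<And>t. t \<in> T \<Longrightarrow> has_expansion m n \<beta> (f t)) \<Longrightarrow> has_expansion m n \<beta> (\<Sum>t\<in>T. f t)"
proof (induction T rule: infinite_finite_induct)
  case (insert t T)
  have "has_expansion m n \<beta> (f t)" "has_expansion m n \<beta> (\<Sum>t\<in>T. f t)"
    using insert.prems by (simp, intro insert.IH, simp)
  with insert.hyps show ?case
    by (simp add: has_expansion_add)
qed (simp_all add: has_expansion_zero)

lemma has_expansion_mono:
  assumes "has_expansion m n \<gamma> P" "\<And>v. lookup \<gamma> v \<le> lookup \<beta> v"
  shows "has_expansion m n \<beta> P"
proof -
  have "admissible_term m n \<beta> (q, r, c)" if "admissible_term m n \<gamma> (q, r, c)" for q r c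
  proof -
    from that have "r \<in> box m n" "\<forall>i\<ge>n. q i = 0" "\<And>i. Suc m * q i + lookup r i \<le> lookup \<gamma> i"
      by (auto simp: admissible_term_def)
    with order.trans[OF this(3) assms(2)] show ?thesis
      by (simp add: admissible_term_def)
  qed
  with assms(1) show ?thesis
    unfolding has_expansion_def by fast
qed

lemma has_expansion_term:
  "admissible_term m n \<beta> (q, r, c) \<Longrightarrow> has_expansion m n \<beta> (grid_prod m n q * single r c)"
  unfolding has_expansion_def by (intro exI[of _ "[(q, r, c)]"]) (simp add: expansion_poly_def)

lemma has_expansion_mult_expansion_poly:
  assumes "\<And>q r c. (q, r, c) \<in> set xs \<Longrightarrow> has_expansion m n \<beta> (A * (grid_prod m n q * single r c))"
  shows "has_expansion m n \<beta> (A * expansion_poly m n xs)"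
  using assms
proof (induction xs)
  case Nil
  then show ?case by (simp add: expansion_poly_def has_expansion_zero)
next
  case (Cons e xs)
  obtain q r c where e: "e = (q, r, c)"
    by (cases e)
  have "A * expansion_poly m n (e # xs) = A * (grid_prod m n q * single r c) + A * expansion_poly m n xs"
    by (simp add: e expansion_poly_def distrib_left)
  moreover have "has_expansion m n \<beta> (A * (grid_prod m n q * single r c))"
    using Cons.prems[of q r c] e by simp
  moreover have "has_expansion m n \<beta> (A * expansion_poly m n xs)"
    using Cons.prems by (intro Cons.IH) simp
  ultimately show ?case
    by (simp only: has_expansion_add)
qed

lemma has_expansion_mconst_mult:
  assumes "has_expansion m n \<beta> P"
  shows "has_expansion m n \<beta> (mconst d * P)"
proof -
  obtain xs where xs: "P = expansion_poly m n xs" "\<forall>e\<in>set xs. admissible_term m n \<beta> e"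
    using assms unfolding has_expansion_def by auto
  have "has_expansion m n \<beta> (mconst d * (grid_prod m n q * single r c))" if "(q, r, c) \<in> set xs" for q r c
  proof -
    have "admissible_term m n \<beta> (q, r, d * c)"
      using xs(2)[rule_format, OF that] by (simp add: admissible_term_def)
    then have "has_expansion m n \<beta> (grid_prod m n q * single r (d * c))"
      by (rule has_expansion_term)
    also have "grid_prod m n q * single r (d * c) = mconst d * (grid_prod m n q * single r c)"
      by (simp only: mult.left_commute[of "mconst d"] mconst_mult_single)
    finally show ?thesis .
  qed
  then show ?thesis
    unfolding xs(1) by (rule has_expansion_mult_expansion_poly)
qed

lemma has_expansion_grid_poly_mult:
  assumes "has_expansion m n \<gamma> P" "i < n"
  shows "has_expansion m n (\<gamma> + single i (Suc m)) (grid_poly m i * P)"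
proof -
  obtain xs where xs: "P = expansion_poly m n xs" "\<forall>e\<in>set xs. admissible_term m n \<gamma> e"
    using assms unfolding has_expansion_def by auto
  have "has_expansion m n (\<gamma> + single i (Suc m)) (grid_poly m i * (grid_prod m n q * single r c))"
    if "(q, r, c) \<in> set xs" for q r c
  proof -
    have adm: "r \<in> box m n" "\<forall>j\<ge>n. q j = 0" "\<And>j. Suc m * q j + lookup r j \<le> lookup \<gamma> j"
      using xs(2)[rule_format, OF that] by (auto simp: admissible_term_def)
    have "Suc m * (q(i := Suc (q i))) j + lookup r j \<le> lookup (\<gamma> + single i (Suc m)) j" for j
      using adm(3)[of j] by (cases "j = i") (auto simp: lookup_add lookup_single)
    with adm(1,2) assms(2) have "admissible_term m n (\<gamma> + single i (Suc m)) (q(i := Suc (q i)), r, c)"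
      by (simp add: admissible_term_def)
    then have "has_expansion m n (\<gamma> + single i (Suc m)) (grid_prod m n (q(i := Suc (q i))) * single r c)"
      by (rule has_expansion_term)
    then show ?thesis
      by (simp add: grid_prod_incr[OF assms(2)] mult.assoc)
  qed
  then show ?thesis
    unfolding xs(1) by (rule has_expansion_mult_expansion_poly)
qed

lemma has_expansion_single_box: "r \<in> box m n \<Longrightarrow> has_expansion m n r (single r c)"
  unfolding has_expansion_def
  by (intro exI[of _ "[(\<lambda>_. 0, r, c)]"]) (simp add: expansion_poly_def admissible_term_def grid_prod_zero)

text \<open>Reduction modulo the grid polynomials: \<open>x\<^sub>i\<^sup>m\<^sup>+\<^sup>1\<close> is \<open>grid_poly m i\<close> plus
  lower powers of \<open>x\<^sub>i\<close>.\<close>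

lemma mon_has_expansion: "keys \<beta> \<subseteq> {..<n} \<Longrightarrow> has_expansion m n \<beta> (single \<beta> 1)"
proof (induction "mon_deg \<beta>" arbitrary: \<beta> rule: less_induct)
  case less
  show ?case
  proof (cases "\<forall>i. lookup \<beta> i \<le> m")
    case True
    with less.prems show ?thesis
      by (intro has_expansion_single_box) (simp add: box_def)
  next
    case False
    then obtain i where "m < lookup \<beta> i"
      by (auto simp: not_le)
    then have "i \<in> keys \<beta>"
      by (simp add: in_keys_iff)
    with less.prems have i: "i < n"
      by auto
    define \<gamma> where "\<gamma> = \<beta> - single i (Suc m)"
    have \<beta>: "\<beta> = \<gamma> + single i (Suc m)"
      by (rule poly_mapping_eqI)
        (use \<open>m < lookup \<beta> i\<close> in \<open>auto simp: \<gamma>_def lookup_add lookup_minus lookup_single when_def\<close>)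
    have "keys \<gamma> \<subseteq> keys \<beta>"
      by (auto simp: \<gamma>_def in_keys_iff lookup_minus)
    with less.prems have "keys \<gamma> \<subseteq> {..<n}"
      by blast
    then have keys_shift: "keys (\<gamma> + single i t) \<subseteq> {..<n}" for t
      using i keys_add[of \<gamma> "single i t"] by (auto split: if_splits)
    have lower: "has_expansion m n (\<gamma> + single i t) (single (\<gamma> + single i t) 1)" if "t \<le> m" for t
      using that by (intro less.hyps keys_shift) (simp add: \<beta> mon_deg_add)
    obtain d where d: "single (single i (Suc m)) 1 - grid_poly m i = (\<Sum>t\<le>m. single (single i t) (d t))"
      using single_minus_grid_poly_eq_sum by blast
    have "single \<beta> 1 = grid_poly m i * single \<gamma> 1 + single \<gamma> 1 * (single (single i (Suc m)) 1 - grid_poly m i)"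
      by (simp add: \<beta> mult_single algebra_simps)
    also have "\<dots> = grid_poly m i * single \<gamma> 1 + (\<Sum>t\<le>m. mconst (d t) * single (\<gamma> + single i t) 1)"
      by (simp add: d sum_distrib_left mult_single mconst_mult_single)
    moreover have "has_expansion m n \<beta> (grid_poly m i * single \<gamma> 1)"
      using has_expansion_grid_poly_mult[OF _ i] lower[of 0] by (simp add: \<beta>)
    moreover have "has_expansion m n \<beta> (\<Sum>t\<le>m. mconst (d t) * single (\<gamma> + single i t) 1)"
      by (intro has_expansion_sum has_expansion_mconst_mult has_expansion_mono[OF lower])
        (auto simp: \<beta> lookup_add lookup_single when_def)
    ultimately show ?thesis
      by (simp add: has_expansion_add)
  qed
qed

lemma sum_has_expansion:
  assumes "finite B" "\<And>\<beta>. \<beta> \<in> B \<Longrightarrow> has_expansion m n \<beta> (f \<beta>)"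
  shows "\<exists>xs. (\<Sum>\<beta>\<in>B. f \<beta>) = expansion_poly m n xs \<and> (\<forall>e\<in>set xs. \<exists>\<beta>\<in>B. admissible_term m n \<beta> e)"
  using assms
proof (induction B rule: finite_induct)
  case empty
  then show ?case
    by (intro exI[of _ "[]"]) (simp add: expansion_poly_def)
next
  case (insert \<beta> B)
  obtain xs where xs: "f \<beta> = expansion_poly m n xs" "\<forall>e\<in>set xs. admissible_term m n \<beta> e"
    using insert.prems[of \<beta>] unfolding has_expansion_def by auto
  obtain ys where ys: "(\<Sum>\<beta>\<in>B. f \<beta>) = expansion_poly m n ys" "\<forall>e\<in>set ys. \<exists>\<beta>\<in>B. admissible_term m n \<beta> e"
    using insert.IH insert.prems by auto
  show ?case
    using insert.hyps xs ys by (intro exI[of _ "xs @ ys"]) (auto simp: expansion_poly_append)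
qed

lemma mpoly_expansion:
  assumes "mvars P \<subseteq> {..<n}"
  obtains xs where "P = expansion_poly m n xs" "\<forall>e\<in>set xs. \<exists>\<beta>\<in>keys P. admissible_term m n \<beta> e"
proof -
  have "has_expansion m n \<beta> (single \<beta> (lookup P \<beta>))" if "\<beta> \<in> keys P" for \<beta>
    using has_expansion_mconst_mult[OF mon_has_expansion, of \<beta> n m "lookup P \<beta>"] assms that
    by (auto simp: mvars_subset_iff mconst_mult_single)
  then obtain xs where "(\<Sum>\<beta>\<in>keys P. single \<beta> (lookup P \<beta>)) = expansion_poly m n xs"
    "\<forall>e\<in>set xs. \<exists>\<beta>\<in>keys P. admissible_term m n \<beta> e"
    using sum_has_expansion[of "keys P" m n "\<lambda>\<beta>. single \<beta> (lookup P \<beta>)"] by auto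
  with that show ?thesis
    by (simp flip: mpoly_eq_sum_single)
qed

lemma lookup_sum_list_single: "lookup (\<Sum>j\<leftarrow>is. single j c) v = c * count_list is v"
  by (induction "is") (auto simp: lookup_add lookup_single)

lemma count_list_replicate_eq: "count_list (replicate c v) w = (if v = w then c else 0)"
  by (induction c) auto

lemma count_list_take_le: "count_list (take k xs) v \<le> count_list xs v"
  by (metis append_take_drop_id count_list_append le_add1)

lemma power_list_le_iff:
  fixes \<gamma> :: mon
  shows "(\<exists>is. length is = k \<and> set is \<subseteq> {..<n} \<and> (\<forall>v. lookup (\<Sum>j\<leftarrow>is. single j (m + 1)) v \<le> lookup \<gamma> v))
     \<longleftrightarrow> k \<le> (\<Sum>v<n. lookup \<gamma> v div Suc m)"
proof
  assume "\<exists>is. length is = k \<and> set is \<subseteq> {..<n} \<and> (\<forall>v. lookup (\<Sum>j\<leftarrow>is. single j (m + 1)) v \<le> lookup \<gamma> v)"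
  then obtain js where js: "length js = k" "set js \<subseteq> {..<n}" "\<And>v. count_list js v * Suc m \<le> lookup \<gamma> v"
    by (auto simp: lookup_sum_list_single mult.commute)
  have "k = (\<Sum>v<n. count_list js v)"
    using sum_count_set[OF js(2)] js(1) by simp
  also have "\<dots> \<le> (\<Sum>v<n. lookup \<gamma> v div Suc m)"
    using js(3) by (intro sum_mono) (simp add: less_eq_div_iff_mult_less_eq)
  finally show "k \<le> (\<Sum>v<n. lookup \<gamma> v div Suc m)" .
next
  assume k: "k \<le> (\<Sum>v<n. lookup \<gamma> v div Suc m)"
  define L where "L = concat (map (\<lambda>v. replicate (lookup \<gamma> v div Suc m) v) [0..<n])"
  have "length L = (\<Sum>v<n. lookup \<gamma> v div Suc m)"
    unfolding L_def by (induction n) auto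
  moreover have "count_list L v = (if v < n then lookup \<gamma> v div Suc m else 0)" for v
    unfolding L_def by (induction n) (auto simp: count_list_replicate_eq)
  then have "Suc m * count_list (take k L) v \<le> lookup \<gamma> v" for v
    using count_list_take_le[of k L v] less_eq_div_iff_mult_less_eq[of "Suc m" "count_list (take k L) v"]
    by (auto simp: mult.commute split: if_splits)
  moreover have "set (take k L) \<subseteq> {..<n}"
    using set_take_subset[of k L] by (auto simp: L_def)
  ultimately show "\<exists>is. length is = k \<and> set is \<subseteq> {..<n} \<and>
      (\<forall>v. lookup (\<Sum>j\<leftarrow>is. single j (m + 1)) v \<le> lookup \<gamma> v)"
    using k by (intro exI[of _ "take k L"]) (simp add: lookup_sum_list_single)
qed

definition reduced_mon :: "nat \<Rightarrow> nat \<Rightarrow> nat \<Rightarrow> mon \<Rightarrow> bool" where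
  "reduced_mon m n k \<gamma> \<longleftrightarrow> keys \<gamma> \<subseteq> {..<n} \<and> mon_deg \<gamma> \<le> m * n + (m + 1) * (k - 1) - 1 \<and>
     (\<Sum>v<n. lookup \<gamma> v div Suc m) < k"

lemma reduced_iff_reduced_mon: "reduced n m k P \<longleftrightarrow> (\<forall>\<gamma>\<in>keys P. reduced_mon m n k \<gamma>)"
  unfolding reduced_def reduced_mon_def mvars_subset_iff mdeg_le_iff power_list_le_iff
  by (auto simp: not_le)

lemma reduced_mon_qsum_less:
  assumes "reduced_mon m n k \<beta>" "\<forall>i. Suc m * q i \<le> lookup \<beta> i"
  shows "qsum n q < k"
proof -
  have "qsum n q \<le> (\<Sum>v<n. lookup \<beta> v div Suc m)"
    unfolding qsum_def using assms(2)
    by (intro sum_mono) (simp add: less_eq_div_iff_mult_less_eq mult.commute)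
  with assms(1) show ?thesis
    unfolding reduced_mon_def by linarith
qed

lemma reduced_mon_not_box_top:
  assumes "reduced_mon m n k \<beta>" "k \<ge> 2" "qsum n q = k - 1"
    and "\<forall>i. Suc m * q i + lookup r i \<le> lookup \<beta> i"
  shows "r \<noteq> box_top m n"
proof
  assume r: "r = box_top m n"
  have "Suc m * (k - 1) + m * n = (\<Sum>v<n. Suc m * q v + lookup r v)"
    using assms(3) r by (simp add: sum.distrib lookup_box_top qsum_def flip: sum_distrib_left)
  also have "\<dots> \<le> (\<Sum>v<n. lookup \<beta> v)"
    using assms(4) by (intro sum_mono) auto
  also have "\<dots> = mon_deg \<beta>"
    using assms(1) mon_deg_eq_sum_lessThan[of \<beta> n] by (simp add: reduced_mon_def)
  also have "\<dots> \<le> m * n + (m + 1) * (k - 1) - 1"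
    using assms(1) unfolding reduced_mon_def by blast
  finally show False
    using assms(2) by simp
qed

lemma keys_subset_if_lookup_le:
  fixes \<alpha> :: mon
  assumes "\<And>v. lookup \<alpha> v \<le> f v" "\<And>v. n \<le> v \<Longrightarrow> f v = 0"
  shows "keys \<alpha> \<subseteq> {..<n}"
proof
  fix v assume v: "v \<in> keys \<alpha>"
  show "v \<in> {..<n}"
  proof (rule ccontr)
    assume "v \<notin> {..<n}"
    then have "f v = 0"
      using assms(2) by simp
    with assms(1)[of v] v show False
      by (simp add: in_keys_iff)
  qed
qed

lemma reduced_mon_add:
  assumes k: "k \<ge> 2" and q: "qsum n q \<le> k - 1" "\<forall>v\<ge>n. q v = 0" and r: "r \<in> box m n"
    and \<delta>: "\<forall>v. lookup \<delta> v \<le> Suc m * q v" and \<rho>: "\<forall>v. lookup \<rho> v \<le> lookup r v"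
    and top: "qsum n q = k - 1 \<Longrightarrow> mon_deg \<rho> < m * n"
  shows "reduced_mon m n k (\<delta> + \<rho>)"
proof -
  have keys_\<delta>: "keys \<delta> \<subseteq> {..<n}"
    using \<delta> q(2) by (intro keys_subset_if_lookup_le[of \<delta> "\<lambda>v. Suc m * q v"]) auto
  have "keys \<rho> \<subseteq> {..<n}"
    using \<rho> r by (intro keys_subset_if_lookup_le[of \<rho> "lookup r"]) (auto simp: box_def in_keys_iff)
  with keys_\<delta> have keys: "keys (\<delta> + \<rho>) \<subseteq> {..<n}"
    using keys_add[of \<delta> \<rho>] by blast
  have "mon_deg \<delta> \<le> Suc m * qsum n q"
    unfolding mon_deg_eq_sum_lessThan[OF keys_\<delta>] qsum_def sum_distrib_left
    using \<delta> by (intro sum_mono) auto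
  moreover have "mon_deg \<rho> \<le> m * n"
    using mon_deg_mono[of \<rho> r] \<rho> mon_deg_box_le[OF r] by auto
  ultimately have "mon_deg (\<delta> + \<rho>) \<le> m * n + (m + 1) * (k - 1) - 1"
  proof (cases "qsum n q = k - 1")
    case True
    with top have "mon_deg \<rho> < m * n" .
    with \<open>mon_deg \<delta> \<le> Suc m * qsum n q\<close> True show ?thesis
      by (simp add: mon_deg_add)
  next
    case False
    with q(1) have "Suc (qsum n q) \<le> k - 1"
      by simp
    then have "Suc m * Suc (qsum n q) \<le> Suc m * (k - 1)"
      by (rule mult_le_mono2)
    with \<open>mon_deg \<delta> \<le> Suc m * qsum n q\<close> \<open>mon_deg \<rho> \<le> m * n\<close> show ?thesis
      by (simp add: mon_deg_add)
  qed
  moreover have "(\<Sum>v<n. lookup (\<delta> + \<rho>) v div Suc m) \<le> qsum n q"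
    unfolding qsum_def
  proof (intro sum_mono)
    fix v
    have "lookup \<rho> v \<le> m"
      using \<rho> r le_trans unfolding box_def by blast
    then have "lookup (\<delta> + \<rho>) v \<le> Suc m * q v + m"
      using \<delta> by (simp add: lookup_add add_mono)
    also have "\<dots> < Suc (q v) * Suc m"
      by simp
    finally show "lookup (\<delta> + \<rho>) v div Suc m \<le> q v"
      by (metis less_mult_imp_div_less less_Suc_eq_le)
  qed
  ultimately show ?thesis
    using keys q(1) k unfolding reduced_mon_def by linarith
qed

section \<open>Existence\<close>

definition grid_vanishing :: "nat \<Rightarrow> nat \<Rightarrow> nat \<Rightarrow> mpoly \<Rightarrow> bool" where
  "grid_vanishing m n k Q \<longleftrightarrow>
     (\<forall>a\<in>grid m n - {\<lambda>_. 0}. zero_mult_ge n k Q a) \<and> zero_mult_ge n (k - 1) Q (\<lambda>_. 0)"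

lemma grid_vanishing_zero: "grid_vanishing m n k 0"
  by (simp add: grid_vanishing_def)

lemma grid_vanishing_add: "grid_vanishing m n k A \<Longrightarrow> grid_vanishing m n k B \<Longrightarrow> grid_vanishing m n k (A + B)"
  by (auto simp: grid_vanishing_def intro: zero_mult_ge_add)

lemma grid_vanishing_diff: "grid_vanishing m n k A \<Longrightarrow> grid_vanishing m n k B \<Longrightarrow> grid_vanishing m n k (A - B)"
  by (auto simp: grid_vanishing_def intro: zero_mult_ge_diff)

lemma grid_vanishing_sum_list:
  "(\<And>x. x \<in> set xs \<Longrightarrow> grid_vanishing m n k (f x)) \<Longrightarrow> grid_vanishing m n k (\<Sum>x\<leftarrow>xs. f x)"
  by (induction xs) (auto intro: grid_vanishing_add grid_vanishing_zero)

lemma keys_sum_list: "keys (\<Sum>x\<leftarrow>xs. f x :: mpoly) \<subseteq> (\<Union>x\<in>set xs. keys (f x))"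
  by (induction xs) (use keys_add in fastforce)+

text \<open>Reducing one term \<open>c \<cdot> grid_prod m n q \<cdot> x\<^sup>r\<close> of an expansion: terms of weight
  \<open>qsum n q \<ge> k\<close> vanish to order \<open>k\<close> on the whole grid and are dropped; in a term of weight
  \<open>k - 1\<close> whose monomial is the top of the box, \<open>x\<^sup>r\<close> is traded for
  \<open>x\<^sup>r - grid_prod_pos m n\<close>, which has lower degree, at the cost of a factor vanishing off
  the origin.\<close>

definition reduce_term :: "nat \<Rightarrow> nat \<Rightarrow> nat \<Rightarrow> (nat \<Rightarrow> nat) \<times> mon \<times> real \<Rightarrow> mpoly" where
  "reduce_term m n k e = (case e of (q, r, c) \<Rightarrow>
     if k \<le> qsum n q then 0
     else if qsum n q = k - 1 \<and> r = box_top m n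
     then grid_prod m n q * (mconst c * (single (box_top m n) 1 - grid_prod_pos m n))
     else grid_prod m n q * single r c)"

lemma grid_vanishing_term_minus_reduce_term:
  assumes "k \<ge> 1"
  shows "grid_vanishing m n k (grid_prod m n q * single r c - reduce_term m n k (q, r, c))"
proof -
  have G: "zero_mult_ge n (qsum n q) (grid_prod m n q) a" if "a \<in> grid m n" for a
    using zero_mult_ge_grid_prod[OF that] .
  consider (high) "k \<le> qsum n q" | (top) "qsum n q = k - 1" "r = box_top m n"
    | (low) "\<not> k \<le> qsum n q" "\<not> (qsum n q = k - 1 \<and> r = box_top m n)"
    by linarith
  then show ?thesis
  proof cases
    case high
    have on_grid: "zero_mult_ge n k (grid_prod m n q * single r c) a" if "a \<in> grid m n" for a
      using G[OF that] high by (intro zero_mult_ge_mult_right) (rule zero_mult_ge_mono)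
    moreover have "zero_mult_ge n (k - 1) (grid_prod m n q * single r c) (\<lambda>_. 0)"
      using on_grid[OF zero_in_grid] by (rule zero_mult_ge_mono) simp
    ultimately show ?thesis
      using high unfolding grid_vanishing_def reduce_term_def by simp
  next
    case top
    have "\<not> k \<le> qsum n q"
      using top assms by simp
    then have eq: "grid_prod m n q * single r c - reduce_term m n k (q, r, c) =
        grid_prod m n q * (mconst c * grid_prod_pos m n)"
      using top by (simp add: reduce_term_def right_diff_distrib mconst_mult_single)
    have "zero_mult_ge n (qsum n q + 1) (grid_prod m n q * (mconst c * grid_prod_pos m n)) a"
      if "a \<in> grid m n - {\<lambda>_. 0}" for a
      using G[of a] that meval_grid_prod_pos_off_origin[OF that]
      by (intro zero_mult_ge_mult) (auto simp: zero_mult_ge_Suc meval_mult)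
    moreover have "zero_mult_ge n (k - 1) (grid_prod m n q * (mconst c * grid_prod_pos m n)) (\<lambda>_. 0)"
      using G[OF zero_in_grid] top by (intro zero_mult_ge_mult_right) simp
    ultimately show ?thesis
      using top assms unfolding grid_vanishing_def eq by simp
  next
    case low
    then show ?thesis
      by (auto simp: reduce_term_def grid_vanishing_zero)
  qed
qed

lemma keys_reduce_term:
  assumes k: "k \<ge> 2" and adm: "admissible_term m n \<beta> (q, r, c)"
    and \<gamma>: "\<gamma> \<in> keys (reduce_term m n k (q, r, c))"
  shows "reduced_mon m n k \<gamma> \<and> mon_deg \<gamma> \<le> mon_deg \<beta>"
proof -
  from adm have r: "r \<in> box m n" and q: "\<forall>i\<ge>n. q i = 0"
    and \<beta>: "\<forall>i. Suc m * q i + lookup r i \<le> lookup \<beta> i"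
    by (auto simp: admissible_term_def)
  have "\<not> k \<le> qsum n q"
    using \<gamma> by (auto simp: reduce_term_def split: if_splits)
  then have qk: "qsum n q \<le> k - 1"
    by simp
  have red: "reduce_term m n k (q, r, c) = (if qsum n q = k - 1 \<and> r = box_top m n
      then grid_prod m n q * (mconst c * (single (box_top m n) 1 - grid_prod_pos m n))
      else grid_prod m n q * single r c)"
    using \<open>\<not> k \<le> qsum n q\<close> by (simp add: reduce_term_def)
  have split: "reduced_mon m n k (\<delta> + \<rho>) \<and> mon_deg (\<delta> + \<rho>) \<le> mon_deg \<beta>"
    if \<delta>: "\<delta> \<in> keys (grid_prod m n q)" and \<rho>: "\<forall>v. lookup \<rho> v \<le> lookup r v"
      and top: "qsum n q = k - 1 \<Longrightarrow> mon_deg \<rho> < m * n" for \<delta> \<rho>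
  proof
    have "\<forall>v. lookup \<delta> v \<le> Suc m * q v"
      using exps_le_grid_prod[OF q] \<delta> unfolding exps_le_def by blast
    then show "reduced_mon m n k (\<delta> + \<rho>)"
      using reduced_mon_add[OF k qk q r _ \<rho> top] by blast
    show "mon_deg (\<delta> + \<rho>) \<le> mon_deg \<beta>"
      using \<open>\<forall>v. lookup \<delta> v \<le> Suc m * q v\<close> \<rho> \<beta>
      by (intro mon_deg_mono) (auto simp: lookup_add intro: order.trans[OF add_mono])
  qed
  show ?thesis
  proof (cases "qsum n q = k - 1 \<and> r = box_top m n")
    case True
    have "\<gamma> \<in> keys (grid_prod m n q * (mconst c * (single (box_top m n) 1 - grid_prod_pos m n)))"
      using \<gamma> unfolding red if_P[OF True] .
    then obtain \<delta> \<rho> where "\<gamma> = \<delta> + \<rho>" "\<delta> \<in> keys (grid_prod m n q)"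
      "\<rho> \<in> keys (single (box_top m n) 1 - grid_prod_pos m n)"
      using keys_mult keys_mconst_mult by blast
    with lead_mon_lower_terms[OF lead_mon_grid_prod_pos] True show ?thesis
      by (simp add: split mon_deg_box_top)
  next
    case False
    have "\<gamma> \<in> keys (grid_prod m n q * single r c)"
      using \<gamma> unfolding red if_not_P[OF False] .
    then obtain \<delta> where "\<gamma> = \<delta> + r" "\<delta> \<in> keys (grid_prod m n q)"
      using keys_mult[of "grid_prod m n q" "single r c"] by (auto split: if_splits)
    with False mon_deg_box_less[OF r] show ?thesis
      by (simp add: split)
  qed
qed

lemma reduced_poly_exists:
  assumes "mvars P \<subseteq> {..<n}" "k \<ge> 2"
  obtains P0 where "reduced n m k P0" "mdeg P0 \<le> mdeg P" "grid_vanishing m n k (P - P0)"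
proof -
  obtain xs where xs: "P = expansion_poly m n xs" "\<forall>e\<in>set xs. \<exists>\<beta>\<in>keys P. admissible_term m n \<beta> e"
    using mpoly_expansion[OF assms(1)] .
  define P0 where "P0 = (\<Sum>e\<leftarrow>xs. reduce_term m n k e)"
  have "P - P0 = (\<Sum>(q, r, c)\<leftarrow>xs. grid_prod m n q * single r c - reduce_term m n k (q, r, c))"
    unfolding xs(1) P0_def expansion_poly_def by (simp add: sum_list_subtractf case_prod_unfold)
  also have "grid_vanishing m n k \<dots>"
    using assms(2) by (intro grid_vanishing_sum_list) (auto intro: grid_vanishing_term_minus_reduce_term)
  finally have "grid_vanishing m n k (P - P0)" .
  moreover have "reduced_mon m n k \<gamma> \<and> mon_deg \<gamma> \<le> mdeg P" if \<gamma>: "\<gamma> \<in> keys P0" for \<gamma>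
  proof -
    obtain q r c where e: "(q, r, c) \<in> set xs" "\<gamma> \<in> keys (reduce_term m n k (q, r, c))"
      using \<gamma> keys_sum_list[of "reduce_term m n k" xs] unfolding P0_def by fastforce
    then obtain \<beta> where "\<beta> \<in> keys P" "admissible_term m n \<beta> (q, r, c)"
      using xs(2) by blast
    with keys_reduce_term[OF assms(2) _ e(2)] show ?thesis
      using mdeg_le_iff[of P "mdeg P"] by fastforce
  qed
  ultimately show ?thesis
    using that[of P0] by (simp add: reduced_iff_reduced_mon mdeg_le_iff)
qed

section \<open>Uniqueness\<close>

lemma grid_prod_sum_eq_sum_fibres:
  assumes "finite J"
  shows "(\<Sum>j\<in>J. grid_prod m n (q j) * \<psi> j) =
    (\<Sum>Q\<in>q ` J. grid_prod m n Q * (\<Sum>j\<in>{j\<in>J. q j = Q}. \<psi> j))"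
  using assms by (simp add: sum.image_gen[of J _ q] sum_distrib_left)

lemma grid_prod_sum_eq_high_part:
  assumes "finite J" "\<forall>j\<in>J. \<forall>i\<ge>n. q j i = 0"
    and low: "\<And>Q. qsum n Q < s \<Longrightarrow> \<forall>i\<ge>n. Q i = 0 \<Longrightarrow> (\<Sum>j\<in>{j\<in>J. q j = Q}. \<psi> j) = 0"
  shows "(\<Sum>j\<in>J. grid_prod m n (q j) * \<psi> j) =
    (\<Sum>j\<in>{j\<in>J. s \<le> qsum n (q j)}. grid_prod m n (q j) * \<psi> j)"
proof -
  let ?low = "{j\<in>J. qsum n (q j) < s}"
  have "(\<Sum>j\<in>?low. grid_prod m n (q j) * \<psi> j) =
      (\<Sum>Q\<in>q ` ?low. grid_prod m n Q * (\<Sum>j\<in>{j\<in>?low. q j = Q}. \<psi> j))"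
    using assms(1) by (intro grid_prod_sum_eq_sum_fibres) simp
  also have "\<dots> = 0"
  proof (intro sum.neutral ballI)
    fix Q assume "Q \<in> q ` ?low"
    then have "qsum n Q < s" "\<forall>i\<ge>n. Q i = 0" "{j\<in>?low. q j = Q} = {j\<in>J. q j = Q}"
      using assms(2) by auto
    with low show "grid_prod m n Q * (\<Sum>j\<in>{j\<in>?low. q j = Q}. \<psi> j) = 0"
      by simp
  qed
  finally have "(\<Sum>j\<in>?low. grid_prod m n (q j) * \<psi> j) = 0" .
  moreover have "J - ?low = {j\<in>J. s \<le> qsum n (q j)}"
    by auto
  ultimately show ?thesis
    using sum.subset_diff[of ?low J "\<lambda>j. grid_prod m n (q j) * \<psi> j"] assms(1) by simp
qed

text \<open>By induction on the weight \<open>qsum n Q\<close>: once the fibres of smaller weight are known to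
  vanish, differentiation evaluates the fibre of \<open>Q\<close> on the grid (or, in the top weight
  \<open>k - 1\<close>, off the origin), and the uniqueness of box polynomials applies.\<close>

lemma fibre_sums_eq_0:
  assumes k: "k \<ge> 2" and "finite J"
    and J: "\<And>j. j \<in> J \<Longrightarrow> keys (\<psi> j) \<subseteq> box m n \<and> (\<forall>i\<ge>n. q j i = 0) \<and> qsum n (q j) \<le> k - 1 \<and>
      (qsum n (q j) = k - 1 \<longrightarrow> lookup (\<psi> j) (box_top m n) = 0)"
    and R: "grid_vanishing m n k (\<Sum>j\<in>J. grid_prod m n (q j) * \<psi> j)"
  shows "qsum n Q \<le> k - 1 \<Longrightarrow> \<forall>i\<ge>n. Q i = 0 \<Longrightarrow> (\<Sum>j\<in>{j\<in>J. q j = Q}. \<psi> j) = 0"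
proof (induction "qsum n Q" arbitrary: Q rule: less_induct)
  case less
  let ?s = "qsum n Q" and ?\<phi> = "\<Sum>j\<in>{j\<in>J. q j = Q}. \<psi> j"
  let ?high = "{j\<in>J. ?s \<le> qsum n (q j)}"
  have high: "(\<Sum>j\<in>J. grid_prod m n (q j) * \<psi> j) = (\<Sum>j\<in>?high. grid_prod m n (q j) * \<psi> j)"
    using less.prems(1) J \<open>finite J\<close> by (intro grid_prod_sum_eq_high_part less.hyps) auto
  have eval: "meval ?\<phi> a = 0"
    if "a \<in> grid m n" "zero_mult_ge n (Suc ?s) (\<Sum>j\<in>J. grid_prod m n (q j) * \<psi> j) a" for a
  proof -
    have "{j\<in>?high. q j = Q} = {j\<in>J. q j = Q}"
      by auto
    moreover have "(\<Sum>j\<in>{j\<in>?high. q j = Q}. meval (\<psi> j) a) = 0"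
      using that J less.prems \<open>finite J\<close> unfolding high
      by (intro grid_prod_sum_fibre_eval_eq_0[where q = q]) auto
    ultimately show ?thesis
      by (simp add: meval_sum)
  qed
  have keys: "keys ?\<phi> \<subseteq> box m n"
    using keys_sum[of \<psi> "{j\<in>J. q j = Q}"] J by blast
  have off_origin: "meval ?\<phi> a = 0" if "a \<in> grid m n - {\<lambda>_. 0}" for a
  proof (rule eval)
    have "zero_mult_ge n k (\<Sum>j\<in>J. grid_prod m n (q j) * \<psi> j) a"
      using R that unfolding grid_vanishing_def by blast
    then show "zero_mult_ge n (Suc ?s) (\<Sum>j\<in>J. grid_prod m n (q j) * \<psi> j) a"
      by (rule zero_mult_ge_mono) (use less.prems(1) k in linarith)
  qed (use that in simp)
  show ?case
  proof (cases "?s = k - 1")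
    case True
    then have "lookup ?\<phi> (box_top m n) = 0"
      using J by (simp add: lookup_sum)
    with keys off_origin show ?thesis
      by (intro box_poly_eq_0_if_vanish_off_origin) auto
  next
    case False
    have "zero_mult_ge n (k - 1) (\<Sum>j\<in>J. grid_prod m n (q j) * \<psi> j) (\<lambda>_. 0)"
      using R unfolding grid_vanishing_def by blast
    then have "zero_mult_ge n (Suc ?s) (\<Sum>j\<in>J. grid_prod m n (q j) * \<psi> j) (\<lambda>_. 0)"
      by (rule zero_mult_ge_mono) (use less.prems(1) False in linarith)
    then have "meval ?\<phi> (\<lambda>_. 0) = 0"
      by (rule eval[OF zero_in_grid])
    with keys off_origin show ?thesis
      by (intro box_poly_eq_0_if_vanish_on_grid) auto
  qed
qed

lemma expansion_poly_eq_0_if_grid_vanishing: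
  assumes k: "k \<ge> 2"
    and terms: "\<And>q r c. (q, r, c) \<in> set xs \<Longrightarrow>
      r \<in> box m n \<and> (\<forall>i\<ge>n. q i = 0) \<and> qsum n q \<le> k - 1 \<and> (qsum n q = k - 1 \<longrightarrow> r \<noteq> box_top m n)"
    and R: "grid_vanishing m n k (expansion_poly m n xs)"
  shows "expansion_poly m n xs = 0"
proof -
  define q where "q p = fst (xs ! p)" for p
  define \<psi> where "\<psi> p = single (fst (snd (xs ! p))) (snd (snd (xs ! p)))" for p
  let ?J = "{..<length xs}"
  have xs: "expansion_poly m n xs = (\<Sum>p\<in>?J. grid_prod m n (q p) * \<psi> p)"
    by (simp add: expansion_poly_def sum_list_sum_nth atLeast0LessThan q_def \<psi>_def case_prod_unfold)
  have J: "keys (\<psi> p) \<subseteq> box m n \<and> (\<forall>i\<ge>n. q p i = 0) \<and> qsum n (q p) \<le> k - 1 \<and>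
      (qsum n (q p) = k - 1 \<longrightarrow> lookup (\<psi> p) (box_top m n) = 0)" if "p \<in> ?J" for p
    using terms[of "q p" "fst (snd (xs ! p))" "snd (snd (xs ! p))"] that
    by (auto simp: q_def \<psi>_def lookup_single)
  have "(\<Sum>p\<in>{p\<in>?J. q p = Q}. \<psi> p) = 0" if "Q \<in> q ` ?J" for Q
  proof (rule fibre_sums_eq_0[OF k finite_lessThan J])
    show "grid_vanishing m n k (\<Sum>p\<in>?J. grid_prod m n (q p) * \<psi> p)"
      using R unfolding xs .
    show "qsum n Q \<le> k - 1" "\<forall>i\<ge>n. Q i = 0"
      using that J by auto
  qed
  then show ?thesis
    unfolding xs grid_prod_sum_eq_sum_fibres[OF finite_lessThan] by simp
qed

lemma reduced_grid_vanishing_eq_0: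
  assumes k: "k \<ge> 2" and R: "reduced n m k R" "grid_vanishing m n k R"
  shows "R = 0"
proof -
  have "mvars R \<subseteq> {..<n}"
    using R(1) by (simp add: reduced_def)
  then obtain xs where xs: "R = expansion_poly m n xs" "\<forall>e\<in>set xs. \<exists>\<beta>\<in>keys R. admissible_term m n \<beta> e"
    by (rule mpoly_expansion)
  have "r \<in> box m n \<and> (\<forall>i\<ge>n. q i = 0) \<and> qsum n q \<le> k - 1 \<and> (qsum n q = k - 1 \<longrightarrow> r \<noteq> box_top m n)"
    if e: "(q, r, c) \<in> set xs" for q r c
  proof -
    obtain \<beta> where \<beta>: "reduced_mon m n k \<beta>" "admissible_term m n \<beta> (q, r, c)"
      using xs(2) e R(1) by (auto simp: reduced_iff_reduced_mon)
    from \<beta>(2) have r: "r \<in> box m n" "\<forall>i\<ge>n. q i = 0"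
      and le: "\<forall>i. Suc m * q i + lookup r i \<le> lookup \<beta> i"
      by (auto simp: admissible_term_def)
    from le have "\<forall>i. Suc m * q i \<le> lookup \<beta> i"
      using add_leD1 by blast
    then have "qsum n q < k"
      by (rule reduced_mon_qsum_less[OF \<beta>(1)])
    moreover have "qsum n q = k - 1 \<longrightarrow> r \<noteq> box_top m n"
      using reduced_mon_not_box_top[OF \<beta>(1) k _ le] by blast
    ultimately show ?thesis
      using r by simp
  qed
  with k R(2) xs(1) show ?thesis
    using expansion_poly_eq_0_if_grid_vanishing by blast
qed

theorem corollary3p4:
  fixes m n k :: nat and P :: mpoly
  assumes "m \<ge> 1" and "n \<ge> 1" and "k \<ge> 2" and "mvars P \<subseteq> {..<n}"
  shows "(\<exists>!P0. reduced n m k P0 \<and>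
            (\<forall>a\<in>grid m n - {(\<lambda>_. 0)}. zero_mult_ge n k (P - P0) a) \<and>
            zero_mult_ge n (k - 1) (P - P0) (\<lambda>_. 0))
       \<and> (\<forall>P0. reduced n m k P0 \<and>
            (\<forall>a\<in>grid m n - {(\<lambda>_. 0)}. zero_mult_ge n k (P - P0) a) \<and>
            zero_mult_ge n (k - 1) (P - P0) (\<lambda>_. 0) \<longrightarrow> mdeg P0 \<le> mdeg P)"
proof -
  obtain P0 where P0: "reduced n m k P0" "mdeg P0 \<le> mdeg P" "grid_vanishing m n k (P - P0)"
    using reduced_poly_exists[OF assms(4,3)] .
  have unique: "P1 = P0" if "reduced n m k P1" "grid_vanishing m n k (P - P1)" for P1
  proof -
    have "reduced n m k (P1 - P0)"
      using that(1) P0(1) keys_diff[of P1 P0] unfolding reduced_iff_reduced_mon by blast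
    moreover have "grid_vanishing m n k (P1 - P0)"
      using grid_vanishing_diff[OF P0(3) that(2)] by simp
    ultimately have "P1 - P0 = 0"
      by (rule reduced_grid_vanishing_eq_0[OF assms(3)])
    then show ?thesis
      by simp
  qed
  show ?thesis
    unfolding grid_vanishing_def[symmetric]
    using P0 unique by blast
qed

end
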